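(* Let $A=KQ/I$ be a finite-dimensional gentle algebra and let $\mathcal{D}$ be a finite multi-set consisting of strings and minimal bands for $A$, with total dimension vector $\mathbf{d}$. Then the family $\mathcal{O}_{\mathcal{D}}$ is an irreducible subset of the module variety $\mathrm{mod}(A,\mathbf{d})$.
   Context: Letters are arrows $\alpha\in Q_1$ (direct) and formal inverses $\alpha^{-1}$ (inverse). A string is a reduced walk $c_1\cdots c_m$ in $Q$ avoiding the relations of $I$ (and their inverses), including trivial strings $e_v$; a string is identified with its inverse. A band is a closed walk $b_1\cdots b_m$ ($m\ge1$) all of whose powers are strings, up to rotation and inversion; it is minimal if it is not of the form $(B')^r$ with $r\ge2$. $M(C)$ denotes the string module of a string $C$ (a copy of $K$ at each vertex position, arrows acting by identities along the letters), and $M(B,\lambda,q)$ ($\lambda\in K^*$, $q\ge1$) the band module (a copy of $K^q$ at each vertex position of the closed walk, arrows acting by identities along letters except one fixed letter acting by the Jordan block $J(\lambda,q)$). $\mathrm{mod}(A,\mathbf{d})$ is the affine variety of representations of $(Q,I)$ with dimension vector $\mathbf{d}$, with Zariski topology and the base change action of $\mathrm{GL}_{\mathbf{d}}$. For a multi-set $\mathcal{D}$ of strings $C_1,\dots,C_s$ and pairwise distinct bands $B_1^{\times q_1},\dots,B_t^{\times q_t}$ (band $B_j$ with multiplicity $q_j$), the family $\mathcal{O}_{\mathcal{D}}$ is the union of the $\mathrm{GL}_{\mathbf{d}}$-orbits of all modules $\bigoplus_i M(C_i)\oplus\bigoplus_j\bigoplus_k M(B_j,\lambda_{jk},q_{jk})$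 with $(q_{jk})_k$ a partition of $q_j$ and $\lambda_{jk}\in K^*$. Standing assumption: $K$ is an algebraically closed field. *)

theory Defs
  imports Main "HOL-Computational_Algebra.Polynomial"
begin

text \<open>A bound quiver (Q,I) with I generated by paths of length two.
  A pair (a,b) in rels means that the path "first a, then b" (i.e. b a, with
  tgt a = src b) lies in I.\<close>

record ('v,'a) bquiver =
  verts :: "'v set"
  arrs  :: "'a set"
  src   :: "'a \<Rightarrow> 'v"
  tgt   :: "'a \<Rightarrow> 'v"
  rels  :: "('a \<times> 'a) set"

definition is_path :: "('v,'a) bquiver \<Rightarrow> 'a list \<Rightarrow> bool" where
  "is_path Q p \<longleftrightarrow> set p \<subseteq> arrs Q \<and>
     (\<forall>i. Suc i < length p \<longrightarrow> tgt Q (p ! i) = src Q (p ! Suc i))"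

text \<open>For a monomial ideal, the non-trivial paths not in I (together with the
  trivial paths) form a basis of KQ/I; finite-dimensionality means there are
  finitely many of them.\<close>
definition fin_dim :: "('v,'a) bquiver \<Rightarrow> bool" where
  "fin_dim Q \<longleftrightarrow> finite {p. is_path Q p \<and>
      (\<forall>i. Suc i < length p \<longrightarrow> (p ! i, p ! Suc i) \<notin> rels Q)}"

definition gentle :: "('v,'a) bquiver \<Rightarrow> bool" where
  "gentle Q \<longleftrightarrow>
     finite (verts Q) \<and> finite (arrs Q) \<and>
     (\<forall>a\<in>arrs Q. src Q a \<in> verts Q \<and> tgt Q a \<in> verts Q) \<and>
     rels Q \<subseteq> {(a,b). a \<in> arrs Q \<and> b \<in> arrs Q \<and> tgt Q a = src Q b} \<and>
     (\<forall>v\<in>verts Q. card {a\<in>arrs Q. src Q a = v} \<le> 2 \<and> card {a\<in>arrs Q. tgt Q a = v} \<le> 2) \<and>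
     (\<forall>b\<in>arrs Q.
        card {a\<in>arrs Q. tgt Q a = src Q b \<and> (a,b) \<in> rels Q} \<le> 1 \<and>
        card {a\<in>arrs Q. tgt Q a = src Q b \<and> (a,b) \<notin> rels Q} \<le> 1) \<and>
     (\<forall>a\<in>arrs Q.
        card {c\<in>arrs Q. src Q c = tgt Q a \<and> (a,c) \<in> rels Q} \<le> 1 \<and>
        card {c\<in>arrs Q. src Q c = tgt Q a \<and> (a,c) \<notin> rels Q} \<le> 1)"

datatype 'a letter = Dir 'a | Inv 'a

fun larr :: "'a letter \<Rightarrow> 'a" where
  "larr (Dir a) = a" | "larr (Inv a) = a"

fun linv :: "'a letter \<Rightarrow> 'a letter" where
  "linv (Dir a) = Inv a" | "linv (Inv a) = Dir a"

fun lsrc :: "('v,'a) bquiver \<Rightarrow> 'a letter \<Rightarrow> 'v" where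
  "lsrc Q (Dir a) = src Q a" | "lsrc Q (Inv a) = tgt Q a"

fun ltgt :: "('v,'a) bquiver \<Rightarrow> 'a letter \<Rightarrow> 'v" where
  "ltgt Q (Dir a) = tgt Q a" | "ltgt Q (Inv a) = src Q a"

type_synonym ('v,'a) walk = "'v \<times> 'a letter list"

fun is_walk :: "('v,'a) bquiver \<Rightarrow> 'v \<Rightarrow> 'a letter list \<Rightarrow> bool" where
  "is_walk Q v [] = (v \<in> verts Q)"
| "is_walk Q v (l # ls) = (larr l \<in> arrs Q \<and> lsrc Q l = v \<and> is_walk Q (ltgt Q l) ls)"

text \<open>Consecutive letters l, l': reduced and avoiding the relations and their inverses.\<close>
fun ok_pair :: "('v,'a) bquiver \<Rightarrow> 'a letter \<Rightarrow> 'a letter \<Rightarrow> bool" where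
  "ok_pair Q (Dir a) (Inv b) = (a \<noteq> b)"
| "ok_pair Q (Inv a) (Dir b) = (a \<noteq> b)"
| "ok_pair Q (Dir a) (Dir b) = ((a,b) \<notin> rels Q)"
| "ok_pair Q (Inv a) (Inv b) = ((b,a) \<notin> rels Q)"

definition is_string :: "('v,'a) bquiver \<Rightarrow> ('v,'a) walk \<Rightarrow> bool" where
  "is_string Q C \<longleftrightarrow> is_walk Q (fst C) (snd C) \<and>
     (\<forall>i. Suc i < length (snd C) \<longrightarrow> ok_pair Q (snd C ! i) (snd C ! Suc i))"

definition is_band :: "('v,'a) bquiver \<Rightarrow> ('v,'a) walk \<Rightarrow> bool" where
  "is_band Q B \<longleftrightarrow> snd B \<noteq> [] \<and>
     (\<forall>n\<ge>1. is_string Q (fst B, concat (replicate n (snd B))))"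

definition minimal_band :: "('v,'a) walk \<Rightarrow> bool" where
  "minimal_band B \<longleftrightarrow> \<not> (\<exists>ls r. r \<ge> 2 \<and> snd B = concat (replicate r ls))"

definition wvert :: "('v,'a) bquiver \<Rightarrow> 'v \<Rightarrow> 'a letter list \<Rightarrow> nat \<Rightarrow> 'v" where
  "wvert Q v ls p = (if p = 0 then v else ltgt Q (ls ! (p - 1)))"

definition inv_walk :: "('v,'a) bquiver \<Rightarrow> ('v,'a) walk \<Rightarrow> ('v,'a) walk" where
  "inv_walk Q C = (wvert Q (fst C) (snd C) (length (snd C)), rev (map linv (snd C)))"

definition rot_walk :: "('v,'a) bquiver \<Rightarrow> nat \<Rightarrow> ('v,'a) walk \<Rightarrow> ('v,'a) walk" where
  "rot_walk Q k C = (wvert Q (fst C) (snd C) k, rotate k (snd C))"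

definition band_equiv :: "('v,'a) bquiver \<Rightarrow> ('v,'a) walk \<Rightarrow> ('v,'a) walk \<Rightarrow> bool" where
  "band_equiv Q B B' \<longleftrightarrow> (\<exists>k<length (snd B).
      B' = rot_walk Q k B \<or> B' = rot_walk Q k (inv_walk Q B))"

text \<open>A direct summand: a string module M(C), or a band module M(B,lambda,q).\<close>
datatype ('v,'a,'k) comp = StrC "('v,'a) walk" | BandC "('v,'a) walk" 'k nat

text \<open>Basis vectors of the direct sum of a list of summands: (summand index, position, copy).\<close>
definition basis :: "('v,'a,'k) comp list \<Rightarrow> (nat \<times> nat \<times> nat) set" where
  "basis cs = {(k,p,c). k < length cs \<and>
      (case cs ! k of StrC C \<Rightarrow> p \<le> length (snd C) \<and> c = 0
                    | BandC B lam q \<Rightarrow> p < length (snd B) \<and> c < q)}"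

definition bvert :: "('v,'a) bquiver \<Rightarrow> ('v,'a,'k) comp list \<Rightarrow> nat \<times> nat \<times> nat \<Rightarrow> 'v" where
  "bvert Q cs b = (case cs ! fst b of
      StrC C \<Rightarrow> wvert Q (fst C) (snd C) (fst (snd b))
    | BandC B lam q \<Rightarrow> wvert Q (fst B) (snd B) (fst (snd b)))"

definition jordan :: "'k::field \<Rightarrow> nat \<Rightarrow> nat \<Rightarrow> 'k" where
  "jordan lam c c' = (if c = c' then lam else if c' = Suc c then 1 else 0)"

text \<open>Coefficient of the output basis vector b in (arrow a applied to basis vector b').
  The letter with index 0 of a band carries the Jordan block.\<close>
definition coef :: "('v,'a,'k::field) comp list \<Rightarrow> 'a \<Rightarrow> nat \<times> nat \<times> nat \<Rightarrow> nat \<times> nat \<times> nat \<Rightarrow> 'k" where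
  "coef cs a b b' = (case (b, b') of ((k,p,c),(k',p',c')) \<Rightarrow>
     if k \<noteq> k' then 0 else
     (case cs ! k of
        StrC C \<Rightarrow> (\<Sum>i<length (snd C).
            if (snd C ! i = Dir a \<and> p' = i \<and> p = Suc i) \<or>
               (snd C ! i = Inv a \<and> p' = Suc i \<and> p = i) then 1 else 0)
      | BandC B lam q \<Rightarrow> (let m = length (snd B) in \<Sum>i<m.
            if (snd B ! i = Dir a \<and> p' = i \<and> p = Suc i mod m) \<or>
               (snd B ! i = Inv a \<and> p' = Suc i mod m \<and> p = i)
            then (if i = 0 then jordan lam c c' else (if c = c' then 1 else 0))
            else 0)))"

text \<open>A point: for each arrow a a d(tgt a) x d(src a) matrix, stored as a function
  with all entries outside the index ranges (and for non-arrows) equal to 0.\<close>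
type_synonym ('a,'k) point = "'a \<Rightarrow> nat \<Rightarrow> nat \<Rightarrow> 'k"

definition aff :: "('v,'a) bquiver \<Rightarrow> ('v \<Rightarrow> nat) \<Rightarrow> ('a,'k::zero) point set" where
  "aff Q d = {x. \<forall>a i j. \<not> (a \<in> arrs Q \<and> i < d (tgt Q a) \<and> j < d (src Q a)) \<longrightarrow> x a i j = 0}"

definition modvar :: "('v,'a) bquiver \<Rightarrow> ('v \<Rightarrow> nat) \<Rightarrow> ('a,'k::comm_ring_1) point set" where
  "modvar Q d = {x \<in> aff Q d. \<forall>(a,b)\<in>rels Q. \<forall>i j.
      (\<Sum>l<d (tgt Q a). x b i l * x a l j) = 0}"

inductive_set polyfun :: "(('a,'k::comm_ring_1) point \<Rightarrow> 'k) set" where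
  pconst: "(\<lambda>x. c) \<in> polyfun"
| pcoord: "(\<lambda>x. x a i j) \<in> polyfun"
| padd: "f \<in> polyfun \<Longrightarrow> g \<in> polyfun \<Longrightarrow> (\<lambda>x. f x + g x) \<in> polyfun"
| pmult: "f \<in> polyfun \<Longrightarrow> g \<in> polyfun \<Longrightarrow> (\<lambda>x. f x * g x) \<in> polyfun"

definition zclosed :: "('v,'a) bquiver \<Rightarrow> ('v \<Rightarrow> nat) \<Rightarrow> ('a,'k::comm_ring_1) point set \<Rightarrow> bool" where
  "zclosed Q d Z \<longleftrightarrow> (\<exists>S \<subseteq> polyfun. Z = {x \<in> aff Q d. \<forall>f\<in>S. f x = 0})"

text \<open>Irreducible subset (w.r.t. the Zariski topology, hence w.r.t. the induced
  topology on any closed subvariety containing it).\<close>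
definition zirreducible :: "('v,'a) bquiver \<Rightarrow> ('v \<Rightarrow> nat) \<Rightarrow> ('a,'k::comm_ring_1) point set \<Rightarrow> bool" where
  "zirreducible Q d X \<longleftrightarrow> X \<noteq> {} \<and>
     (\<forall>Z1 Z2. zclosed Q d Z1 \<and> zclosed Q d Z2 \<and> X \<subseteq> Z1 \<union> Z2 \<longrightarrow> X \<subseteq> Z1 \<or> X \<subseteq> Z2)"

definition inverse_mats :: "nat \<Rightarrow> (nat \<Rightarrow> nat \<Rightarrow> 'k::comm_ring_1) \<Rightarrow> (nat \<Rightarrow> nat \<Rightarrow> 'k) \<Rightarrow> bool" where
  "inverse_mats n g h \<longleftrightarrow> (\<forall>i<n. \<forall>j<n.
      (\<Sum>l<n. g i l * h l j) = (if i = j then 1 else 0) \<and>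
      (\<Sum>l<n. h i l * g l j) = (if i = j then 1 else 0))"

text \<open>(g . y)_a = g_{tgt a} y_a g_{src a}^{-1}, where h is the inverse of g.\<close>
definition gl_act :: "('v,'a) bquiver \<Rightarrow> ('v \<Rightarrow> nat) \<Rightarrow> ('v \<Rightarrow> nat \<Rightarrow> nat \<Rightarrow> 'k::comm_ring_1)
     \<Rightarrow> ('v \<Rightarrow> nat \<Rightarrow> nat \<Rightarrow> 'k) \<Rightarrow> ('a,'k) point \<Rightarrow> ('a,'k) point" where
  "gl_act Q d g h y = (\<lambda>a i j. if a \<in> arrs Q \<and> i < d (tgt Q a) \<and> j < d (src Q a)
      then (\<Sum>l<d (tgt Q a). \<Sum>l'<d (src Q a). g (tgt Q a) i l * y a l l' * h (src Q a) l' j)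
      else 0)"

definition gl_orbit :: "('v,'a) bquiver \<Rightarrow> ('v \<Rightarrow> nat) \<Rightarrow> ('a,'k::comm_ring_1) point \<Rightarrow> ('a,'k) point set" where
  "gl_orbit Q d y = {gl_act Q d g h y | g h. \<forall>v\<in>verts Q. inverse_mats (d v) (g v) (h v)}"

text \<open>The point of the direct sum of the summands cs, using the enumeration e v of the
  basis vectors lying at vertex v.\<close>
definition rep_point :: "('v,'a) bquiver \<Rightarrow> ('v \<Rightarrow> nat) \<Rightarrow> ('v,'a,'k::field) comp list
     \<Rightarrow> ('v \<Rightarrow> nat \<Rightarrow> nat \<times> nat \<times> nat) \<Rightarrow> ('a,'k) point" where
  "rep_point Q d cs e = (\<lambda>a i j. if a \<in> arrs Q \<and> i < d (tgt Q a) \<and> j < d (src Q a)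
      then coef cs a (e (tgt Q a) i) (e (src Q a) j) else 0)"

text \<open>Total dimension vector of D = strings Cs and bands Bs with multiplicities qs.\<close>
definition dimD :: "('v,'a) bquiver \<Rightarrow> ('v,'a) walk list \<Rightarrow> ('v,'a) walk list \<Rightarrow> nat list \<Rightarrow> 'v \<Rightarrow> nat" where
  "dimD Q Cs Bs qs v =
     (\<Sum>C\<leftarrow>Cs. card {p. p \<le> length (snd C) \<and> wvert Q (fst C) (snd C) p = v}) +
     (\<Sum>j<length Bs. qs ! j * card {p. p < length (snd (Bs ! j)) \<and> wvert Q (fst (Bs ! j)) (snd (Bs ! j)) p = v})"

text \<open>The summand list for strings Cs and, for each band B_j, a list parts_j of pairs
  (lambda_jk, q_jk).\<close>
definition comps :: "('v,'a) walk list \<Rightarrow> ('v,'a) walk list \<Rightarrow> ('k \<times> nat) list list \<Rightarrow> ('v,'a,'k) comp list" where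
  "comps Cs Bs parts = map StrC Cs @
     concat (map (\<lambda>j. map (\<lambda>(lam,q). BandC (Bs ! j) lam q) (parts ! j)) [0..<length Bs])"

definition famO :: "('v,'a) bquiver \<Rightarrow> ('v,'a) walk list \<Rightarrow> ('v,'a) walk list \<Rightarrow> nat list
     \<Rightarrow> ('a,'k::field) point set" where
  "famO Q Cs Bs qs = (let d = dimD Q Cs Bs qs in
     \<Union> {gl_orbit Q d (rep_point Q d (comps Cs Bs parts) e) | parts e.
         length parts = length Bs \<and>
         (\<forall>j<length Bs. (\<forall>(lam,q)\<in>set (parts ! j). lam \<noteq> 0 \<and> q \<ge> 1) \<and>
                        sum_list (map snd (parts ! j)) = qs ! j) \<and>
         (\<forall>v\<in>verts Q. bij_betw (e v) {..<d v}
              {b \<in> basis (comps Cs Bs parts). bvert Q (comps Cs Bs parts) b = v})})"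

definition alg_closed :: "'k::field itself \<Rightarrow> bool" where
  "alg_closed _ \<longleftrightarrow> (\<forall>p::'k poly. degree p > 0 \<longrightarrow> (\<exists>z. poly p z = 0))"

end

theory Submission
  imports Defs "Jordan_Normal_Form.Jordan_Normal_Form_Existence"
begin

section \<open>Polynomial and regular functions of one variable\<close>

lemma range_poly_const [intro]: "(\<lambda>t. c :: 'k::comm_ring_1) \<in> range poly"
  by (rule range_eqI[of _ _ "[:c:]"]) (simp add: fun_eq_iff)

lemma range_poly_id [intro]: "(\<lambda>t :: 'k::comm_ring_1. t) \<in> range poly"
  by (rule range_eqI[of _ _ "[:0, 1:]"]) (simp add: fun_eq_iff)

lemma range_poly_add [intro]:
  assumes "F \<in> range poly" "G \<in> range poly"
  shows "(\<lambda>t. F t + G t :: 'k::comm_ring_1) \<in> range poly"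
proof -
  obtain p p' where "F = poly p" "G = poly p'"
    using assms by blast
  then show ?thesis
    by (intro range_eqI[of _ _ "p + p'"]) (simp add: fun_eq_iff)
qed

lemma range_poly_diff [intro]:
  assumes "F \<in> range poly" "G \<in> range poly"
  shows "(\<lambda>t. F t - G t :: 'k::comm_ring_1) \<in> range poly"
proof -
  obtain p p' where "F = poly p" "G = poly p'"
    using assms by blast
  then show ?thesis
    by (intro range_eqI[of _ _ "p - p'"]) (simp add: fun_eq_iff)
qed

lemma range_poly_mult [intro]:
  assumes "F \<in> range poly" "G \<in> range poly"
  shows "(\<lambda>t. F t * G t :: 'k::comm_ring_1) \<in> range poly"
proof -
  obtain p p' where "F = poly p" "G = poly p'"
    using assms by blast
  then show ?thesis
    by (intro range_eqI[of _ _ "p * p'"]) (simp add: fun_eq_iff)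
qed

lemma range_poly_sum [intro]:
  "(\<And>i. i \<in> A \<Longrightarrow> (\<lambda>t. f i t) \<in> range poly) \<Longrightarrow> (\<lambda>t. \<Sum>i\<in>A. f i t :: 'k::comm_ring_1) \<in> range poly"
  by (induction A rule: infinite_finite_induct) (simp_all add: range_poly_add range_poly_const)

lemma range_poly_prod [intro]:
  "(\<And>i. i \<in> A \<Longrightarrow> (\<lambda>t. f i t) \<in> range poly) \<Longrightarrow> (\<lambda>t. \<Prod>i\<in>A. f i t :: 'k::comm_ring_1) \<in> range poly"
  by (induction A rule: infinite_finite_induct) (simp_all add: range_poly_mult range_poly_const)

lemma range_poly_if [intro]: "F \<in> range poly \<Longrightarrow> G \<in> range poly \<Longrightarrow> (\<lambda>t. if P then F t else G t) \<in> range poly"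
  by (cases P) auto

lemma range_poly_det:
  assumes "\<And>t. A t \<in> carrier_mat n n"
    and "\<And>i j. i < n \<Longrightarrow> j < n \<Longrightarrow> (\<lambda>t. A t $$ (i, j)) \<in> range poly"
  shows "(\<lambda>t. det (A t)) \<in> range poly"
proof -
  have "(\<lambda>t. \<Sum>p\<in>{p. p permutes {0..<n}}. signof p * (\<Prod>i = 0..<n. A t $$ (i, p i))) \<in> range poly"
    using assms(2) by (intro range_poly_sum range_poly_mult range_poly_prod range_poly_const)
      (auto simp: permutes_in_image)
  then show ?thesis
    using det_def'[OF assms(1)] by simp
qed

text \<open>The localisation \<open>K[t][1/q]\<close>, viewed as functions on the complement of the zeros of \<open>q\<close>.\<close>

definition regular_off :: "'k::field poly \<Rightarrow> ('k \<Rightarrow> 'k) set" where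
  "regular_off q = {F. \<exists>p n. \<forall>t. poly q t \<noteq> 0 \<longrightarrow> F t = poly p t / poly q t ^ n}"

lemma range_poly_regular_off:
  assumes "F \<in> range poly"
  shows "F \<in> regular_off q"
proof -
  obtain p where "F = poly p"
    using assms by blast
  then have "\<forall>t. poly q t \<noteq> 0 \<longrightarrow> F t = poly p t / poly q t ^ 0"
    by simp
  then show ?thesis
    unfolding regular_off_def by blast
qed

lemma regular_off_add:
  assumes "F \<in> regular_off q" "G \<in> regular_off q"
  shows "(\<lambda>t. F t + G t) \<in> regular_off q"
proof -
  obtain p n p' n' where F: "\<And>t. poly q t \<noteq> 0 \<Longrightarrow> F t = poly p t / poly q t ^ n"
    and G: "\<And>t. poly q t \<noteq> 0 \<Longrightarrow> G t = poly p' t / poly q t ^ n'"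
    using assms unfolding regular_off_def by blast
  have "F t + G t = poly (p * q ^ n' + p' * q ^ n) t / poly q t ^ (n + n')" if "poly q t \<noteq> 0" for t
    using that by (simp add: F G poly_power power_add field_simps)
  then show ?thesis
    unfolding regular_off_def by blast
qed

lemma regular_off_mult:
  assumes "F \<in> regular_off q" "G \<in> regular_off q"
  shows "(\<lambda>t. F t * G t) \<in> regular_off q"
proof -
  obtain p n p' n' where F: "\<And>t. poly q t \<noteq> 0 \<Longrightarrow> F t = poly p t / poly q t ^ n"
    and G: "\<And>t. poly q t \<noteq> 0 \<Longrightarrow> G t = poly p' t / poly q t ^ n'"
    using assms unfolding regular_off_def by blast
  have "F t * G t = poly (p * p') t / poly q t ^ (n + n')" if "poly q t \<noteq> 0" for t
    using that by (simp add: F G power_add)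
  then show ?thesis
    unfolding regular_off_def by blast
qed

lemma regular_off_sum:
  "(\<And>i. i \<in> A \<Longrightarrow> (\<lambda>t. f i t) \<in> regular_off q) \<Longrightarrow> (\<lambda>t. \<Sum>i\<in>A. f i t) \<in> regular_off q"
  by (induction A rule: infinite_finite_induct)
    (auto intro: range_poly_regular_off regular_off_add)

lemma regular_off_inverse:
  assumes "\<And>t. poly q t = D t * E t" and "E \<in> range poly"
  shows "(\<lambda>t. inverse (D t)) \<in> regular_off q"
proof -
  obtain p where "E = poly p"
    using assms(2) by blast
  then have "inverse (D t) = poly p t / poly q t ^ 1" if "poly q t \<noteq> 0" for t
    using that assms(1) by (simp add: field_simps)
  then show ?thesis
    unfolding regular_off_def by blast
qed

lemma regular_off_nonzero_cofinite:
  assumes "F \<in> regular_off q" "poly q s \<noteq> 0" "F s \<noteq> 0"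
  shows "finite {t. poly q t = 0 \<or> F t = 0}"
proof -
  obtain p n where F: "\<And>t. poly q t \<noteq> 0 \<Longrightarrow> F t = poly p t / poly q t ^ n"
    using assms(1) unfolding regular_off_def by blast
  have "poly (q * p) s \<noteq> 0"
    using assms(2,3) F[of s] by auto
  then have "finite {t. poly (q * p) t = 0}"
    by (intro poly_roots_finite) auto
  moreover have "poly (q * p) t = 0" if "poly q t = 0 \<or> F t = 0" for t
    using that F[of t] by (cases "poly q t = 0") auto
  then have "{t. poly q t = 0 \<or> F t = 0} \<subseteq> {t. poly (q * p) t = 0}"
    by blast
  ultimately show ?thesis
    by (rule finite_subset[rotated])
qed

section \<open>Irreducibility via rational curves\<close>

lemma polyfun_comp_regular_off:
  assumes "f \<in> polyfun" and "\<And>a i j. (\<lambda>t. Phi t a i j) \<in> regular_off q"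
  shows "(\<lambda>t. f (Phi t)) \<in> regular_off q"
  using assms(1) by induction
    (auto intro: assms(2) range_poly_regular_off regular_off_add regular_off_mult)

lemma alg_closed_infinite:
  assumes "alg_closed TYPE('k::field)"
  shows "infinite (UNIV :: 'k set)"
proof
  assume fin: "finite (UNIV :: 'k set)"
  define P :: "'k poly" where "P = (\<Prod>a\<in>UNIV. [:- a, 1:])"
  have "degree P = (\<Sum>a\<in>(UNIV :: 'k set). degree [:- a, 1:])"
    unfolding P_def by (rule degree_prod_eq_sum_degree) auto
  also have "\<dots> = card (UNIV :: 'k set)"
    by simp
  also have "\<dots> > 0"
    using fin by (simp add: card_gt_0_iff)
  finally have "degree (1 + P) > 0"
    by (subst degree_add_eq_right) auto
  then obtain z where "poly (1 + P) z = 0"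
    using assms unfolding alg_closed_def by blast
  moreover have "poly P z = 0"
    unfolding P_def poly_prod using fin by (auto intro!: prod_zero bexI[of _ z])
  ultimately show False
    by simp
qed

text \<open>A closed set avoiding \<open>x\<^sub>1\<close> is cut out by some \<open>f\<^sub>1\<close> with \<open>f\<^sub>1 x\<^sub>1 \<noteq> 0\<close>,
  and similarly for \<open>x\<^sub>2\<close>; along the curve both are nonzero off a finite set.\<close>

lemma zirreducibleI_rational_curves:
  fixes X :: "('a, 'k::field) point set"
  assumes inf: "infinite (UNIV :: 'k set)" and "X \<noteq> {}" and X: "X \<subseteq> aff Q d"
    and curves: "\<And>x1 x2. x1 \<in> X \<Longrightarrow> x2 \<in> X \<Longrightarrow> \<exists>Phi q. poly q 0 \<noteq> 0 \<and> poly q 1 \<noteq> 0 \<and>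
        Phi 0 = x1 \<and> Phi 1 = x2 \<and> (\<forall>t. poly q t \<noteq> 0 \<longrightarrow> Phi t \<in> X) \<and>
        (\<forall>a i j. (\<lambda>t. Phi t a i j) \<in> regular_off q)"
  shows "zirreducible Q d X"
  unfolding zirreducible_def
proof (intro conjI allI impI \<open>X \<noteq> {}\<close>)
  fix Z1 Z2 :: "('a, 'k) point set"
  assume Z: "zclosed Q d Z1 \<and> zclosed Q d Z2 \<and> X \<subseteq> Z1 \<union> Z2"
  show "X \<subseteq> Z1 \<or> X \<subseteq> Z2"
  proof (rule ccontr)
    assume "\<not> (X \<subseteq> Z1 \<or> X \<subseteq> Z2)"
    then obtain x1 x2 where x1: "x1 \<in> X" "x1 \<notin> Z1" and x2: "x2 \<in> X" "x2 \<notin> Z2"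
      by blast
    obtain S1 S2 where S: "S1 \<subseteq> polyfun" "S2 \<subseteq> polyfun"
      and Z1: "Z1 = {x \<in> aff Q d. \<forall>f\<in>S1. f x = 0}" and Z2: "Z2 = {x \<in> aff Q d. \<forall>f\<in>S2. f x = 0}"
      using Z unfolding zclosed_def by blast
    obtain f1 f2 where f: "f1 \<in> S1" "f1 x1 \<noteq> 0" "f2 \<in> S2" "f2 x2 \<noteq> 0"
      using x1 x2 X Z1 Z2 by blast
    obtain Phi q where q: "poly q 0 \<noteq> 0" "poly q 1 \<noteq> 0" and Phi: "Phi 0 = x1" "Phi 1 = x2"
      and in_X: "\<forall>t. poly q t \<noteq> 0 \<longrightarrow> Phi t \<in> X" and reg: "\<forall>a i j. (\<lambda>t. Phi t a i j) \<in> regular_off q"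
      using curves[OF x1(1) x2(1)] by blast
    have "finite {t. poly q t = 0 \<or> f1 (Phi t) = 0}"
      by (rule regular_off_nonzero_cofinite[OF polyfun_comp_regular_off, where s = 0])
        (use f S q Phi reg in auto)
    moreover have "finite {t. poly q t = 0 \<or> f2 (Phi t) = 0}"
      by (rule regular_off_nonzero_cofinite[OF polyfun_comp_regular_off, where s = 1])
        (use f S q Phi reg in auto)
    ultimately have "finite ({t. poly q t = 0 \<or> f1 (Phi t) = 0} \<union> {t. poly q t = 0 \<or> f2 (Phi t) = 0})"
      by blast
    then obtain t where "t \<notin> {t. poly q t = 0 \<or> f1 (Phi t) = 0} \<union> {t. poly q t = 0 \<or> f2 (Phi t) = 0}"
      using ex_new_if_finite[OF inf] by blast
    then have "poly q t \<noteq> 0" "f1 (Phi t) \<noteq> 0" "f2 (Phi t) \<noteq> 0"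
      by auto
    moreover have "Phi t \<in> Z1 \<union> Z2"
      using in_X Z \<open>poly q t \<noteq> 0\<close> by blast
    ultimately show False
      using f(1,3) Z1 Z2 by blast
  qed
qed

definition mat_fun :: "nat \<Rightarrow> nat \<Rightarrow> (nat \<Rightarrow> nat \<Rightarrow> 'k) \<Rightarrow> 'k mat" where
  "mat_fun r c f = mat r c (\<lambda>(i, j). f i j)"

definition mult_fun :: "nat \<Rightarrow> (nat \<Rightarrow> nat \<Rightarrow> 'k::comm_ring_1) \<Rightarrow> (nat \<Rightarrow> nat \<Rightarrow> 'k) \<Rightarrow> nat \<Rightarrow> nat \<Rightarrow> 'k" where
  "mult_fun n f g i j = (\<Sum>l<n. f i l * g l j)"

lemma mat_fun_carrier [simp]: "mat_fun r c f \<in> carrier_mat r c"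
  by (simp add: mat_fun_def)

lemma mat_fun_dim [simp]: "dim_row (mat_fun r c f) = r" "dim_col (mat_fun r c f) = c"
  by (simp_all add: mat_fun_def)

lemma index_mat_fun [simp]: "i < r \<Longrightarrow> j < c \<Longrightarrow> mat_fun r c f $$ (i, j) = f i j"
  by (simp add: mat_fun_def)

lemma mat_fun_eq_iff: "mat_fun r c f = mat_fun r c g \<longleftrightarrow> (\<forall>i<r. \<forall>j<c. f i j = g i j)"
  by (auto simp: mat_fun_def mat_eq_iff)

lemma mat_fun_of_mat: "A \<in> carrier_mat r c \<Longrightarrow> mat_fun r c (\<lambda>i j. A $$ (i, j)) = A"
  by (intro eq_matI) auto

lemma mat_fun_mult: "mat_fun r n f * mat_fun n c g = mat_fun r c (mult_fun n f g)"
  by (rule eq_matI)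
    (auto simp: mat_fun_def mult_fun_def scalar_prod_def lessThan_atLeast0 intro!: sum.cong)

lemma one_mat_eq_mat_fun: "1\<^sub>m n = mat_fun n n (\<lambda>i j. if i = j then 1 else 0)"
  by (intro eq_matI) auto

lemma inverse_mats_iff:
  "inverse_mats n g h \<longleftrightarrow> mat_fun n n g * mat_fun n n h = 1\<^sub>m n \<and> mat_fun n n h * mat_fun n n g = 1\<^sub>m n"
  unfolding mat_fun_mult one_mat_eq_mat_fun mat_fun_eq_iff inverse_mats_def mult_fun_def by blast

lemma inverse_mats_sym: "inverse_mats n g h \<Longrightarrow> inverse_mats n h g"
  unfolding inverse_mats_def by blast

lemma inverse_mats_one: "inverse_mats n (\<lambda>i j. if i = j then 1 else 0) (\<lambda>i j. if i = j then 1 else 0)"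
  unfolding inverse_mats_iff one_mat_eq_mat_fun[symmetric] by simp

lemma mult_inverse_mult_one:
  fixes A B C D :: "'k::comm_ring_1 mat"
  assumes "A \<in> carrier_mat n n" "B \<in> carrier_mat n n" "C \<in> carrier_mat n n" "D \<in> carrier_mat n n"
    and "A * B = 1\<^sub>m n" "C * D = 1\<^sub>m n"
  shows "A * C * (D * B) = 1\<^sub>m n"
proof -
  have "A * C * (D * B) = A * ((C * D) * B)"
    using assms(1-4) by (simp add: assoc_mult_mat[of _ n n _ n _ n])
  then show ?thesis
    using assms by simp
qed

lemma right_inverse_unique:
  fixes A B B' :: "'k::comm_ring_1 mat"
  assumes "A \<in> carrier_mat n n" "B \<in> carrier_mat n n" "B' \<in> carrier_mat n n"
    and "B * A = 1\<^sub>m n" "A * B' = 1\<^sub>m n"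
  shows "B = B'"
proof -
  have "B = B * (A * B')"
    using assms(5) right_mult_one_mat[OF assms(2)] by simp
  also have "\<dots> = (B * A) * B'"
    using assms(1-3) by (simp add: assoc_mult_mat[of _ n n _ n _ n])
  also have "\<dots> = B'"
    using assms(4) left_mult_one_mat[OF assms(3)] by simp
  finally show ?thesis .
qed

lemma inverse_mats_mult:
  assumes "inverse_mats n g h" "inverse_mats n g' h'"
  shows "inverse_mats n (mult_fun n g g') (mult_fun n h' h)"
  using assms unfolding inverse_mats_iff mat_fun_mult[symmetric]
  by (auto intro: mult_inverse_mult_one)

lemma inverse_mats_unique:
  assumes "inverse_mats n g h" "inverse_mats n g h'" "i < n" "j < n"
  shows "h i j = h' i j"
proof -
  have "mat_fun n n h = mat_fun n n h'"
    using assms(1,2) unfolding inverse_mats_iff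
    by (auto intro: right_inverse_unique[OF mat_fun_carrier mat_fun_carrier mat_fun_carrier])
  then show ?thesis
    using assms(3,4) by (metis index_mat_fun)
qed

lemma inverse_mats_det_nonzero:
  assumes "inverse_mats n g h"
  shows "det (mat_fun n n g) \<noteq> 0"
proof -
  have "det (mat_fun n n g) * det (mat_fun n n h) = 1"
    using assms by (simp add: inverse_mats_iff det_mult[of _ n, symmetric])
  then show ?thesis
    by auto
qed

definition inv_fun :: "nat \<Rightarrow> (nat \<Rightarrow> nat \<Rightarrow> 'k::field) \<Rightarrow> nat \<Rightarrow> nat \<Rightarrow> 'k" where
  "inv_fun n g i j = adj_mat (mat_fun n n g) $$ (i, j) / det (mat_fun n n g)"

lemma inverse_mats_inv_fun:
  assumes "det (mat_fun n n g) \<noteq> 0"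
  shows "inverse_mats n g (inv_fun n g)"
proof -
  let ?A = "mat_fun n n g" and ?D = "det (mat_fun n n g)"
  have A: "?A \<in> carrier_mat n n"
    by simp
  note adj = adj_mat[OF A]
  have inv: "mat_fun n n (inv_fun n g) = inverse ?D \<cdot>\<^sub>m adj_mat ?A"
    using adj(1) by (intro eq_matI) (auto simp: inv_fun_def field_simps)
  have "inverse ?D \<cdot>\<^sub>m (?D \<cdot>\<^sub>m 1\<^sub>m n) = 1\<^sub>m n"
    using assms by (intro eq_matI) auto
  then have "?A * (inverse ?D \<cdot>\<^sub>m adj_mat ?A) = 1\<^sub>m n" "(inverse ?D \<cdot>\<^sub>m adj_mat ?A) * ?A = 1\<^sub>m n"
    using adj by (simp_all add: mult_smult_distrib[OF A adj(1)] mult_smult_assoc_mat[OF adj(1) A])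
  then show ?thesis
    unfolding inverse_mats_iff inv by simp
qed

lemma gl_act_aff: "gl_act Q d g h y \<in> aff Q d"
  by (simp add: aff_def gl_act_def)

lemma mat_fun_gl_act:
  assumes "a \<in> arrs Q"
  shows "mat_fun (d (tgt Q a)) (d (src Q a)) (gl_act Q d g h y a) =
    mat_fun (d (tgt Q a)) (d (tgt Q a)) (g (tgt Q a)) * mat_fun (d (tgt Q a)) (d (src Q a)) (y a) *
    mat_fun (d (src Q a)) (d (src Q a)) (h (src Q a))"
  unfolding mat_fun_mult mat_fun_eq_iff
proof (intro allI impI)
  fix i j assume "i < d (tgt Q a)" "j < d (src Q a)"
  have "(\<Sum>l'<d (src Q a). (\<Sum>l<d (tgt Q a). g (tgt Q a) i l * y a l l') * h (src Q a) l' j) =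
      (\<Sum>l<d (tgt Q a). \<Sum>l'<d (src Q a). g (tgt Q a) i l * y a l l' * h (src Q a) l' j)"
    by (simp add: sum_distrib_right) (rule sum.swap)
  then show "gl_act Q d g h y a i j = mult_fun (d (src Q a)) (mult_fun (d (tgt Q a)) (g (tgt Q a)) (y a))
      (h (src Q a)) i j"
    using assms \<open>i < d (tgt Q a)\<close> \<open>j < d (src Q a)\<close> by (simp add: gl_act_def mult_fun_def)
qed

lemma gl_act_eqI:
  assumes "\<And>a. a \<in> arrs Q \<Longrightarrow> mat_fun (d (tgt Q a)) (d (src Q a)) (gl_act Q d g h y a) =
    mat_fun (d (tgt Q a)) (d (src Q a)) (gl_act Q d g' h' y' a)"
  shows "gl_act Q d g h y = gl_act Q d g' h' y'"
proof (intro ext)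
  fix a i j
  show "gl_act Q d g h y a i j = gl_act Q d g' h' y' a i j"
  proof (cases "a \<in> arrs Q \<and> i < d (tgt Q a) \<and> j < d (src Q a)")
    case True
    then show ?thesis
      using assms[of a] by (metis index_mat_fun)
  qed (auto simp: gl_act_def)
qed

lemma mult_conj_mult_assoc:
  fixes G G' Y H' H :: "'k::comm_ring_1 mat"
  assumes "G \<in> carrier_mat t t" "G' \<in> carrier_mat t t" "Y \<in> carrier_mat t s"
    "H' \<in> carrier_mat s s" "H \<in> carrier_mat s s"
  shows "G * (G' * Y * H') * H = G * G' * Y * (H' * H)"
  using assms
  by (simp add: assoc_mult_mat[of _ t t _ s _ s] assoc_mult_mat[of _ t s _ s _ s] assoc_mult_mat[of _ t t _ t _ s])

lemma gl_act_gl_act: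
  "gl_act Q d g h (gl_act Q d g' h' y) =
    gl_act Q d (\<lambda>v. mult_fun (d v) (g v) (g' v)) (\<lambda>v. mult_fun (d v) (h' v) (h v)) y"
proof (rule gl_act_eqI)
  fix a assume "a \<in> arrs Q"
  then show "mat_fun (d (tgt Q a)) (d (src Q a)) (gl_act Q d g h (gl_act Q d g' h' y) a) =
      mat_fun (d (tgt Q a)) (d (src Q a))
        (gl_act Q d (\<lambda>v. mult_fun (d v) (g v) (g' v)) (\<lambda>v. mult_fun (d v) (h' v) (h v)) y a)"
    by (simp add: mat_fun_gl_act mult_conj_mult_assoc[of _ "d (tgt Q a)" _ _ "d (src Q a)"]
        flip: mat_fun_mult)
qed

lemma gl_act_cong:
  assumes "\<forall>a\<in>arrs Q. src Q a \<in> verts Q \<and> tgt Q a \<in> verts Q"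
    and "\<And>v i j. v \<in> verts Q \<Longrightarrow> i < d v \<Longrightarrow> j < d v \<Longrightarrow> g v i j = g' v i j \<and> h v i j = h' v i j"
  shows "gl_act Q d g h y = gl_act Q d g' h' y"
  unfolding gl_act_def using assms by (intro ext) (auto intro!: sum.cong)

lemma gl_orbit_trans:
  assumes "y \<in> gl_orbit Q d x" "z \<in> gl_orbit Q d y"
  shows "z \<in> gl_orbit Q d x"
proof -
  obtain g h g' h' where "\<forall>v\<in>verts Q. inverse_mats (d v) (g v) (h v)" "y = gl_act Q d g h x"
    "\<forall>v\<in>verts Q. inverse_mats (d v) (g' v) (h' v)" "z = gl_act Q d g' h' y"
    using assms unfolding gl_orbit_def by blast
  then have "z = gl_act Q d (\<lambda>v. mult_fun (d v) (g' v) (g v)) (\<lambda>v. mult_fun (d v) (h v) (h' v)) x"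
    "\<forall>v\<in>verts Q. inverse_mats (d v) (mult_fun (d v) (g' v) (g v)) (mult_fun (d v) (h v) (h' v))"
    by (simp_all add: gl_act_gl_act inverse_mats_mult)
  then show ?thesis
    unfolding gl_orbit_def by blast
qed

lemma gentle_arr_verts: "gentle Q \<Longrightarrow> a \<in> arrs Q \<Longrightarrow> src Q a \<in> verts Q \<and> tgt Q a \<in> verts Q"
  unfolding gentle_def by blast

lemma gentle_rel: "gentle Q \<Longrightarrow> (a, b) \<in> rels Q \<Longrightarrow> a \<in> arrs Q \<and> b \<in> arrs Q \<and> tgt Q a = src Q b"
  unfolding gentle_def by blast

lemma mat_fun_eq_zero_iff: "mat_fun r c f = 0\<^sub>m r c \<longleftrightarrow> (\<forall>i<r. \<forall>j<c. f i j = 0)"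
  by (auto simp: mat_fun_def mat_eq_iff)

lemma modvar_iff_mat_fun:
  "x \<in> modvar Q d \<longleftrightarrow> x \<in> aff Q d \<and> (\<forall>(a, b)\<in>rels Q.
    mat_fun (d (tgt Q b)) (d (tgt Q a)) (x b) * mat_fun (d (tgt Q a)) (d (src Q a)) (x a) =
    0\<^sub>m (d (tgt Q b)) (d (src Q a)))"
proof -
  have "(\<Sum>l<d (tgt Q a). x b i l * x a l j) = 0"
    if "x \<in> aff Q d" "\<not> (i < d (tgt Q b) \<and> j < d (src Q a))" for a b i j
    using that unfolding aff_def by (auto intro!: sum.neutral)
  then show ?thesis
    unfolding modvar_def mat_fun_mult mat_fun_eq_zero_iff mult_fun_def by blast
qed

lemma conj_mult_conj_zero:
  fixes G Y H G' Y' H' :: "'k::comm_ring_1 mat"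
  assumes "G \<in> carrier_mat u u" "Y \<in> carrier_mat u w" "H \<in> carrier_mat w w"
    "G' \<in> carrier_mat w w" "Y' \<in> carrier_mat w s" "H' \<in> carrier_mat s s"
    and "H * G' = 1\<^sub>m w" "Y * Y' = 0\<^sub>m u s"
  shows "G * Y * H * (G' * Y' * H') = 0\<^sub>m u s"
proof -
  have "G * Y * H * (G' * Y' * H') = G * (Y * (H * G') * Y') * H'"
    using assms(1-6)
    by (simp add: assoc_mult_mat[of _ u u _ w _ w] assoc_mult_mat[of _ w w _ s _ s]
        assoc_mult_mat[of _ u u _ w _ s] assoc_mult_mat[of _ u w _ w _ s] assoc_mult_mat[of _ w w _ w _ s]
        assoc_mult_mat[of _ u u _ s _ s] assoc_mult_mat[of _ u w _ s _ s])
  also have "\<dots> = 0\<^sub>m u s"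
    using assms by simp
  finally show ?thesis .
qed

lemma gl_act_modvar:
  assumes G: "gentle Q" and x: "x \<in> modvar Q d"
    and inv: "\<forall>v\<in>verts Q. inverse_mats (d v) (g v) (h v)"
  shows "gl_act Q d g h x \<in> modvar Q d"
  unfolding modvar_iff_mat_fun
proof (intro conjI gl_act_aff ballI, clarify)
  fix a b assume r: "(a, b) \<in> rels Q"
  have ab: "a \<in> arrs Q" "b \<in> arrs Q" "src Q b = tgt Q a" "tgt Q a \<in> verts Q"
    using gentle_rel[OF G r] gentle_arr_verts[OF G] by auto
  let ?u = "d (tgt Q b)" and ?w = "d (tgt Q a)" and ?s = "d (src Q a)"
  have "mat_fun ?w ?w (h (tgt Q a)) * mat_fun ?w ?w (g (tgt Q a)) = 1\<^sub>m ?w"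
    using inv ab(4) inverse_mats_iff by blast
  moreover have "mat_fun ?u ?w (x b) * mat_fun ?w ?s (x a) = 0\<^sub>m ?u ?s"
    using x r unfolding modvar_iff_mat_fun by auto
  ultimately have "mat_fun ?u ?u (g (tgt Q b)) * mat_fun ?u ?w (x b) * mat_fun ?w ?w (h (tgt Q a)) *
      (mat_fun ?w ?w (g (tgt Q a)) * mat_fun ?w ?s (x a) * mat_fun ?s ?s (h (src Q a))) = 0\<^sub>m ?u ?s"
    by (rule conj_mult_conj_zero[OF mat_fun_carrier mat_fun_carrier mat_fun_carrier mat_fun_carrier
          mat_fun_carrier mat_fun_carrier])
  then show "mat_fun ?u ?w (gl_act Q d g h x b) * mat_fun ?w ?s (gl_act Q d g h x a) = 0\<^sub>m ?u ?s"
    using mat_fun_gl_act[OF ab(2), of d g h x] mat_fun_gl_act[OF ab(1), of d g h x] ab(3) by simp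
qed

lemma gl_orbit_modvar:
  assumes "gentle Q" "x \<in> modvar Q d"
  shows "gl_orbit Q d x \<subseteq> modvar Q d"
  using gl_act_modvar[OF assms] unfolding gl_orbit_def by blast

definition coef_point :: "('v, 'a) bquiver \<Rightarrow> ('v \<Rightarrow> nat) \<Rightarrow> ('a \<Rightarrow> 'b \<Rightarrow> 'b \<Rightarrow> 'k::zero) \<Rightarrow>
    ('v \<Rightarrow> nat \<Rightarrow> 'b) \<Rightarrow> ('a, 'k) point" where
  "coef_point Q d c e = (\<lambda>a i j. if a \<in> arrs Q \<and> i < d (tgt Q a) \<and> j < d (src Q a)
      then c a (e (tgt Q a) i) (e (src Q a) j) else 0)"

lemma rep_point_eq_coef_point: "rep_point Q d cs e = coef_point Q d (coef cs) e"
  by (simp add: rep_point_def coef_point_def)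

lemma coef_point_aff: "coef_point Q d c e \<in> aff Q d"
  by (simp add: aff_def coef_point_def)

lemma inverse_mats_change_basis:
  assumes e1: "bij_betw e1 {..<n} B" and e2: "bij_betw e2 {..<n} B"
    and ST: "\<forall>b\<in>B. \<forall>b'\<in>B. (\<Sum>x\<in>B. S b x * T x b') = (if b = b' then 1 else 0)"
    and TS: "\<forall>b\<in>B. \<forall>b'\<in>B. (\<Sum>x\<in>B. T b x * S x b') = (if b = b' then 1 else 0)"
  shows "inverse_mats n (\<lambda>i l. S (e2 i) (e1 l)) (\<lambda>l j. T (e1 l) (e2 j))"
  unfolding inverse_mats_def
proof (intro allI impI conjI)
  fix i j assume ij: "i < n" "j < n"
  have "(\<Sum>l<n. S (e2 i) (e1 l) * T (e1 l) (e2 j)) = (\<Sum>x\<in>B. S (e2 i) x * T x (e2 j))"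
    by (rule sum.reindex_bij_betw[OF e1])
  moreover have "e2 i \<in> B" "e2 j \<in> B" "e2 i = e2 j \<longleftrightarrow> i = j"
    using e2 ij unfolding bij_betw_def inj_on_def by auto
  ultimately show "(\<Sum>l<n. S (e2 i) (e1 l) * T (e1 l) (e2 j)) = (if i = j then 1 else 0)"
    using ST by simp
  have "(\<Sum>l<n. T (e1 i) (e2 l) * S (e2 l) (e1 j)) = (\<Sum>x\<in>B. T (e1 i) x * S x (e1 j))"
    by (rule sum.reindex_bij_betw[OF e2])
  moreover have "e1 i \<in> B" "e1 j \<in> B" "e1 i = e1 j \<longleftrightarrow> i = j"
    using e1 ij unfolding bij_betw_def inj_on_def by auto
  ultimately show "(\<Sum>l<n. T (e1 i) (e2 l) * S (e2 l) (e1 j)) = (if i = j then 1 else 0)"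
    using TS by simp
qed

lemma coef_point_change_basis:
  fixes Bv :: "'v \<Rightarrow> 'b set" and S T :: "'b \<Rightarrow> 'b \<Rightarrow> 'k::comm_ring_1"
  assumes ends: "\<forall>a\<in>arrs Q. src Q a \<in> verts Q \<and> tgt Q a \<in> verts Q"
    and e1: "\<forall>v\<in>verts Q. bij_betw (e1 v) {..<d v} (Bv v)"
    and e2: "\<forall>v\<in>verts Q. bij_betw (e2 v) {..<d v} (Bv v)"
    and c: "\<forall>a\<in>arrs Q. \<forall>b\<in>Bv (tgt Q a). \<forall>b'\<in>Bv (src Q a).
      c2 a b b' = (\<Sum>x\<in>Bv (tgt Q a). \<Sum>x'\<in>Bv (src Q a). S b x * c1 a x x' * T x' b')"
  shows "coef_point Q d c2 e2 =
    gl_act Q d (\<lambda>v i l. S (e2 v i) (e1 v l)) (\<lambda>v l j. T (e1 v l) (e2 v j)) (coef_point Q d c1 e1)"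
proof (intro ext)
  fix a i j
  show "coef_point Q d c2 e2 a i j =
    gl_act Q d (\<lambda>v i l. S (e2 v i) (e1 v l)) (\<lambda>v l j. T (e1 v l) (e2 v j)) (coef_point Q d c1 e1) a i j"
  proof (cases "a \<in> arrs Q \<and> i < d (tgt Q a) \<and> j < d (src Q a)")
    case True
    let ?t = "tgt Q a" and ?s = "src Q a"
    have bt: "bij_betw (e1 ?t) {..<d ?t} (Bv ?t)" and bs: "bij_betw (e1 ?s) {..<d ?s} (Bv ?s)"
      using e1 ends True by auto
    have "e2 ?t i \<in> Bv ?t" "e2 ?s j \<in> Bv ?s"
      using e2 ends True by (auto dest: bij_betwE)
    then have "c2 a (e2 ?t i) (e2 ?s j) =
        (\<Sum>x\<in>Bv ?t. \<Sum>x'\<in>Bv ?s. S (e2 ?t i) x * c1 a x x' * T x' (e2 ?s j))"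
      using c True by blast
    also have "\<dots> = (\<Sum>l<d ?t. \<Sum>l'<d ?s. S (e2 ?t i) (e1 ?t l) * c1 a (e1 ?t l) (e1 ?s l') *
        T (e1 ?s l') (e2 ?s j))"
      by (simp add: sum.reindex_bij_betw[OF bt, symmetric] sum.reindex_bij_betw[OF bs, symmetric])
    finally show ?thesis
      using True by (simp add: gl_act_def coef_point_def)
  qed (auto simp: coef_point_def gl_act_def)
qed

lemma coef_point_in_gl_orbit:
  fixes Bv :: "'v \<Rightarrow> 'b set" and S T :: "'b \<Rightarrow> 'b \<Rightarrow> 'k::comm_ring_1"
  assumes ends: "\<forall>a\<in>arrs Q. src Q a \<in> verts Q \<and> tgt Q a \<in> verts Q"
    and e1: "\<forall>v\<in>verts Q. bij_betw (e1 v) {..<d v} (Bv v)"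
    and e2: "\<forall>v\<in>verts Q. bij_betw (e2 v) {..<d v} (Bv v)"
    and ST: "\<forall>v\<in>verts Q. \<forall>b\<in>Bv v. \<forall>b'\<in>Bv v. (\<Sum>x\<in>Bv v. S b x * T x b') = (if b = b' then 1 else 0)"
    and TS: "\<forall>v\<in>verts Q. \<forall>b\<in>Bv v. \<forall>b'\<in>Bv v. (\<Sum>x\<in>Bv v. T b x * S x b') = (if b = b' then 1 else 0)"
    and c: "\<forall>a\<in>arrs Q. \<forall>b\<in>Bv (tgt Q a). \<forall>b'\<in>Bv (src Q a).
      c2 a b b' = (\<Sum>x\<in>Bv (tgt Q a). \<Sum>x'\<in>Bv (src Q a). S b x * c1 a x x' * T x' b')"
  shows "coef_point Q d c2 e2 \<in> gl_orbit Q d (coef_point Q d c1 e1)"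
proof -
  have "\<forall>v\<in>verts Q. inverse_mats (d v) (\<lambda>i l. S (e2 v i) (e1 v l)) (\<lambda>l j. T (e1 v l) (e2 v j))"
    using e1 e2 ST TS by (blast intro: inverse_mats_change_basis)
  then show ?thesis
    unfolding gl_orbit_def coef_point_change_basis[OF ends e1 e2 c] by blast
qed

lemma sum_delta_mult:
  "finite A \<Longrightarrow> b \<in> A \<Longrightarrow> (\<Sum>x\<in>A. (if b = x then 1 else 0) * f x) = (f b :: 'k::comm_ring_1)"
  by (simp add: if_distrib[where f = "\<lambda>y. y * _"] cong: if_cong)

lemma sum_mult_delta:
  "finite A \<Longrightarrow> b \<in> A \<Longrightarrow> (\<Sum>x\<in>A. f x * (if x = b then 1 else 0)) = (f b :: 'k::comm_ring_1)"
  by (simp add: if_distrib[where f = "\<lambda>y. _ * y"] cong: if_cong)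

lemma coef_point_reenumerate:
  fixes c :: "'a \<Rightarrow> 'b \<Rightarrow> 'b \<Rightarrow> 'k::comm_ring_1"
  assumes ends: "\<forall>a\<in>arrs Q. src Q a \<in> verts Q \<and> tgt Q a \<in> verts Q"
    and e1: "\<forall>v\<in>verts Q. bij_betw (e1 v) {..<d v} (Bv v)"
    and e2: "\<forall>v\<in>verts Q. bij_betw (e2 v) {..<d v} (Bv v)"
  shows "coef_point Q d c e2 \<in> gl_orbit Q d (coef_point Q d c e1)"
proof (rule coef_point_in_gl_orbit[OF ends e1 e2])
  let ?S = "\<lambda>b b'. if b = b' then 1 else 0 :: 'k"
  have fin: "finite (Bv v)" if "v \<in> verts Q" for v
    using e1 that bij_betw_finite by blast
  show "\<forall>v\<in>verts Q. \<forall>b\<in>Bv v. \<forall>b'\<in>Bv v. (\<Sum>x\<in>Bv v. ?S b x * ?S x b') = ?S b b'"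
  proof (intro ballI)
    fix v b b' assume "v \<in> verts Q" "b \<in> Bv v"
    then show "(\<Sum>x\<in>Bv v. ?S b x * ?S x b') = ?S b b'"
      by (intro sum_delta_mult[where f = "\<lambda>x. ?S x b'"] fin)
  qed
  then show "\<forall>v\<in>verts Q. \<forall>b\<in>Bv v. \<forall>b'\<in>Bv v. (\<Sum>x\<in>Bv v. ?S b x * ?S x b') = ?S b b'" .
  show "\<forall>a\<in>arrs Q. \<forall>b\<in>Bv (tgt Q a). \<forall>b'\<in>Bv (src Q a).
      c a b b' = (\<Sum>x\<in>Bv (tgt Q a). \<Sum>x'\<in>Bv (src Q a). ?S b x * c a x x' * ?S x' b')"
    using fin ends by (simp add: sum_delta_mult sum_mult_delta mult.assoc flip: sum_distrib_left)
qed

section \<open>Direct sums of string modules and band modules with arbitrary matrices\<close>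

definition str_coef :: "('v, 'a) walk \<Rightarrow> 'a \<Rightarrow> nat \<Rightarrow> nat \<Rightarrow> 'k::comm_ring_1" where
  "str_coef C a p p' = (\<Sum>i<length (snd C).
     if (snd C ! i = Dir a \<and> p' = i \<and> p = Suc i) \<or> (snd C ! i = Inv a \<and> p' = Suc i \<and> p = i)
     then 1 else 0)"

definition band_coef :: "('v, 'a) walk \<Rightarrow> (nat \<Rightarrow> nat \<Rightarrow> 'k::comm_ring_1) \<Rightarrow> 'a \<Rightarrow>
    nat \<Rightarrow> nat \<Rightarrow> nat \<Rightarrow> nat \<Rightarrow> 'k" where
  "band_coef B M a p c p' c' = (\<Sum>i<length (snd B).
     if (snd B ! i = Dir a \<and> p' = i \<and> p = Suc i mod length (snd B)) \<or>
        (snd B ! i = Inv a \<and> p' = Suc i mod length (snd B) \<and> p = i)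
     then (if i = 0 then M c c' else if c = c' then 1 else 0) else 0)"

lemma coef_eq: "coef cs a (k, p, c) (k', p', c') = (if k \<noteq> k' then 0 else
   (case cs ! k of StrC C \<Rightarrow> str_coef C a p p' | BandC B lam q \<Rightarrow> band_coef B (jordan lam) a p c p' c'))"
  unfolding coef_def str_coef_def band_coef_def by (simp add: Let_def split: comp.splits)

lemma str_coef_nonzeroE:
  assumes "str_coef C a p p' \<noteq> (0::'k::comm_ring_1)"
  obtains i where "i < length (snd C)"
    "(snd C ! i = Dir a \<and> p' = i \<and> p = Suc i) \<or> (snd C ! i = Inv a \<and> p' = Suc i \<and> p = i)"
proof -
  obtain i where "i \<in> {..<length (snd C)}" "(if (snd C ! i = Dir a \<and> p' = i \<and> p = Suc i) \<or>
      (snd C ! i = Inv a \<and> p' = Suc i \<and> p = i) then 1 else 0) \<noteq> (0::'k)"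
    using assms unfolding str_coef_def by (rule sum.not_neutral_contains_not_neutral)
  then show ?thesis
    by (intro that[of i]) (auto split: if_splits)
qed

lemma band_coef_nonzeroE:
  fixes M :: "nat \<Rightarrow> nat \<Rightarrow> 'k::comm_ring_1"
  assumes "band_coef B M a p c p' c' \<noteq> 0"
  obtains i where "i < length (snd B)"
    "(snd B ! i = Dir a \<and> p' = i \<and> p = Suc i mod length (snd B)) \<or>
     (snd B ! i = Inv a \<and> p' = Suc i mod length (snd B) \<and> p = i)"
proof -
  obtain i where "i \<in> {..<length (snd B)}" "(if (snd B ! i = Dir a \<and> p' = i \<and> p = Suc i mod length (snd B)) \<or>
        (snd B ! i = Inv a \<and> p' = Suc i mod length (snd B) \<and> p = i)
      then (if i = 0 then M c c' else if c = c' then 1 else 0) else 0) \<noteq> (0::'k)"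
    using assms unfolding band_coef_def by (rule sum.not_neutral_contains_not_neutral)
  then show ?thesis
    by (intro that[of i]) (auto split: if_splits)
qed

lemma is_string_ok_pair:
  "is_string Q C \<Longrightarrow> Suc i < length (snd C) \<Longrightarrow> ok_pair Q (snd C ! i) (snd C ! Suc i)"
  by (simp add: is_string_def)

text \<open>Bands are strings up to rotation: the letter after the last one is the first one.\<close>

lemma is_band_ok_pair:
  assumes "is_band Q B" "i < length (snd B)"
  shows "ok_pair Q (snd B ! i) (snd B ! (Suc i mod length (snd B)))"
proof -
  let ?w = "snd B"
  have "is_string Q (fst B, concat (replicate 2 ?w))"
    using assms(1) by (simp add: is_band_def)
  moreover have "concat (replicate 2 ?w) = ?w @ ?w"
    by (simp add: numeral_2_eq_2)
  ultimately have "is_string Q (fst B, ?w @ ?w)"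
    by simp
  then have "ok_pair Q ((?w @ ?w) ! i) ((?w @ ?w) ! Suc i)"
    using assms(2) by (simp add: is_string_def)
  moreover have "(?w @ ?w) ! i = ?w ! i"
    using assms(2) by (simp add: nth_append)
  moreover have "(?w @ ?w) ! Suc i = ?w ! (Suc i mod length ?w)"
  proof (cases "Suc i < length ?w")
    case False
    then have "Suc i = length ?w"
      using assms(2) by simp
    then show ?thesis
      by (simp add: nth_append)
  qed (simp add: nth_append)
  ultimately show ?thesis
    by simp
qed

lemma str_coef_rel:
  assumes "is_string Q C" "(a, b) \<in> rels Q"
  shows "str_coef C b p p'' * str_coef C a p'' p' = (0::'k::comm_ring_1)"
proof (rule ccontr)
  assume "\<not> ?thesis"
  then have "str_coef C b p p'' \<noteq> (0::'k)" "str_coef C a p'' p' \<noteq> (0::'k)"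
    by auto
  then obtain i i' where i: "i < length (snd C)"
      "(snd C ! i = Dir b \<and> p'' = i \<and> p = Suc i) \<or> (snd C ! i = Inv b \<and> p'' = Suc i \<and> p = i)"
    and i': "i' < length (snd C)"
      "(snd C ! i' = Dir a \<and> p' = i' \<and> p'' = Suc i') \<or> (snd C ! i' = Inv a \<and> p' = Suc i' \<and> p'' = i')"
    by (elim str_coef_nonzeroE) blast
  from i(2) i'(2) show False
  proof (elim disjE conjE)
    assume "snd C ! i = Dir b" "p'' = i" "snd C ! i' = Dir a" "p'' = Suc i'"
    then show False
      using is_string_ok_pair[OF assms(1), of i'] i assms(2) by simp
  next
    assume "snd C ! i = Inv b" "p'' = Suc i" "snd C ! i' = Inv a" "p'' = i'"
    then show False
      using is_string_ok_pair[OF assms(1), of i] i' assms(2) by simp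
  qed auto
qed

lemma band_coef_rel:
  fixes M M' :: "nat \<Rightarrow> nat \<Rightarrow> 'k::comm_ring_1"
  assumes "is_band Q B" "(a, b) \<in> rels Q"
  shows "band_coef B M b p c p'' c'' * band_coef B M' a p'' c'' p' c' = 0"
proof (rule ccontr)
  let ?m = "length (snd B)"
  assume "\<not> ?thesis"
  then have "band_coef B M b p c p'' c'' \<noteq> 0" "band_coef B M' a p'' c'' p' c' \<noteq> 0"
    by auto
  then obtain i i' where i: "i < ?m"
      "(snd B ! i = Dir b \<and> p'' = i \<and> p = Suc i mod ?m) \<or> (snd B ! i = Inv b \<and> p'' = Suc i mod ?m \<and> p = i)"
    and i': "i' < ?m"
      "(snd B ! i' = Dir a \<and> p' = i' \<and> p'' = Suc i' mod ?m) \<or> (snd B ! i' = Inv a \<and> p' = Suc i' mod ?m \<and> p'' = i')"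
    by (elim band_coef_nonzeroE) blast
  have Suc_mod_inj: "Suc x mod ?m = Suc y mod ?m \<Longrightarrow> x < ?m \<Longrightarrow> y < ?m \<Longrightarrow> x = y" for x y
    by (cases "Suc x = ?m"; cases "Suc y = ?m") auto
  from i(2) i'(2) show False
  proof (elim disjE conjE)
    assume "snd B ! i = Dir b" "p'' = i" "snd B ! i' = Dir a" "p'' = Suc i' mod ?m"
    then show False
      using is_band_ok_pair[OF assms(1) i'(1)] assms(2) by simp
  next
    assume "snd B ! i = Inv b" "p'' = Suc i mod ?m" "snd B ! i' = Inv a" "p'' = i'"
    then show False
      using is_band_ok_pair[OF assms(1) i(1)] assms(2) by simp
  next
    assume "snd B ! i = Inv b" "p'' = Suc i mod ?m" "snd B ! i' = Dir a" "p'' = Suc i' mod ?m"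
    then show False
      using Suc_mod_inj[of i i'] i(1) i'(1) by auto
  qed auto
qed

lemma coef_point_modvar:
  assumes G: "gentle Q" and e: "\<forall>v\<in>verts Q. bij_betw (e v) {..<d v} (Bv v)"
    and rel: "\<And>a b x b1 b2. (a, b) \<in> rels Q \<Longrightarrow> x \<in> Bv (tgt Q a) \<Longrightarrow> c b b1 x * c a x b2 = 0"
  shows "coef_point Q d c e \<in> modvar Q d"
  unfolding modvar_def
proof (intro CollectI conjI coef_point_aff ballI allI, clarify)
  fix a b i j assume r: "(a, b) \<in> rels Q"
  have "tgt Q a = src Q b" "tgt Q a \<in> verts Q"
    using gentle_rel[OF G r] gentle_arr_verts[OF G] by auto
  then have "e (tgt Q a) l \<in> Bv (tgt Q a)" if "l < d (tgt Q a)" for l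
    using e that by (auto dest: bij_betwE)
  then show "(\<Sum>l<d (tgt Q a). coef_point Q d c e b i l * coef_point Q d c e a l j) = 0"
    using \<open>tgt Q a = src Q b\<close> rel[OF r] by (auto simp: coef_point_def intro!: sum.neutral)
qed

text \<open>The direct sum of the string modules \<open>M(C\<^sub>i)\<close> and of the band modules \<open>M(B\<^sub>j, N\<^sub>j)\<close>, where the
  \<open>q\<^sub>j \<times> q\<^sub>j\<close> matrix \<open>N\<^sub>j\<close> takes the place of a Jordan block. Basis vector \<open>(k, p, c)\<close> is copy \<open>c\<close>
  of position \<open>p\<close> of summand \<open>k\<close>, the bands being numbered after the strings.\<close>

definition dsum_basis :: "('v, 'a) walk list \<Rightarrow> ('v, 'a) walk list \<Rightarrow> nat list \<Rightarrow> (nat \<times> nat \<times> nat) set" where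
  "dsum_basis Cs Bs qs = {(k, p, c). (k < length Cs \<and> p \<le> length (snd (Cs ! k)) \<and> c = 0) \<or>
     (length Cs \<le> k \<and> k - length Cs < length Bs \<and> p < length (snd (Bs ! (k - length Cs))) \<and>
      c < qs ! (k - length Cs))}"

definition dsum_vert :: "('v, 'a) bquiver \<Rightarrow> ('v, 'a) walk list \<Rightarrow> ('v, 'a) walk list \<Rightarrow> nat \<times> nat \<times> nat \<Rightarrow> 'v" where
  "dsum_vert Q Cs Bs b = (case b of (k, p, c) \<Rightarrow>
     if k < length Cs then wvert Q (fst (Cs ! k)) (snd (Cs ! k)) p
     else wvert Q (fst (Bs ! (k - length Cs))) (snd (Bs ! (k - length Cs))) p)"

definition dsum_basis_at :: "('v, 'a) bquiver \<Rightarrow> ('v, 'a) walk list \<Rightarrow> ('v, 'a) walk list \<Rightarrow> nat list \<Rightarrow>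
    'v \<Rightarrow> (nat \<times> nat \<times> nat) set" where
  "dsum_basis_at Q Cs Bs qs v = {b \<in> dsum_basis Cs Bs qs. dsum_vert Q Cs Bs b = v}"

definition dsum_coef :: "('v, 'a) walk list \<Rightarrow> ('v, 'a) walk list \<Rightarrow> (nat \<Rightarrow> nat \<Rightarrow> nat \<Rightarrow> 'k::comm_ring_1) \<Rightarrow>
    'a \<Rightarrow> nat \<times> nat \<times> nat \<Rightarrow> nat \<times> nat \<times> nat \<Rightarrow> 'k" where
  "dsum_coef Cs Bs N a b b' = (case (b, b') of ((k, p, c), (k', p', c')) \<Rightarrow>
     if k \<noteq> k' then 0
     else if k < length Cs then str_coef (Cs ! k) a p p'
     else band_coef (Bs ! (k - length Cs)) (N (k - length Cs)) a p c p' c')"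

lemma dsum_basis_at_eq:
  "dsum_basis_at Q Cs Bs qs v =
    (\<Union>k<length Cs. (\<lambda>p. (k, p, 0)) ` {p. p \<le> length (snd (Cs ! k)) \<and> wvert Q (fst (Cs ! k)) (snd (Cs ! k)) p = v}) \<union>
    (\<Union>j<length Bs. (\<lambda>(p, c). (length Cs + j, p, c)) `
      ({p. p < length (snd (Bs ! j)) \<and> wvert Q (fst (Bs ! j)) (snd (Bs ! j)) p = v} \<times> {..<qs ! j}))"
    (is "_ = ?S \<union> ?B")
proof (intro Set.set_eqI iffI)
  fix b assume "b \<in> dsum_basis_at Q Cs Bs qs v"
  then obtain k p c where b: "b = (k, p, c)" "(k, p, c) \<in> dsum_basis Cs Bs qs" "dsum_vert Q Cs Bs (k, p, c) = v"
    unfolding dsum_basis_at_def by (cases b) auto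
  show "b \<in> ?S \<union> ?B"
  proof (cases "k < length Cs")
    case True
    then have "c = 0" "p \<le> length (snd (Cs ! k))" "wvert Q (fst (Cs ! k)) (snd (Cs ! k)) p = v"
      using b by (auto simp: dsum_basis_def dsum_vert_def)
    then show ?thesis
      using b True by blast
  next
    case False
    then have "k - length Cs < length Bs" "p < length (snd (Bs ! (k - length Cs)))" "c < qs ! (k - length Cs)"
      "wvert Q (fst (Bs ! (k - length Cs))) (snd (Bs ! (k - length Cs))) p = v"
      using b by (auto simp: dsum_basis_def dsum_vert_def)
    moreover have "b = (\<lambda>(p, c). (length Cs + (k - length Cs), p, c)) (p, c)"
      using b False by simp
    ultimately show ?thesis
      by blast
  qed
qed (auto simp: dsum_basis_at_def dsum_basis_def dsum_vert_def)

lemma card_dsum_basis_at: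
  "finite (dsum_basis_at Q Cs Bs qs v) \<and> card (dsum_basis_at Q Cs Bs qs v) = dimD Q Cs Bs qs v"
proof -
  define P where "P k = {p. p \<le> length (snd (Cs ! k)) \<and> wvert Q (fst (Cs ! k)) (snd (Cs ! k)) p = v}" for k
  define R where "R j = {p. p < length (snd (Bs ! j)) \<and> wvert Q (fst (Bs ! j)) (snd (Bs ! j)) p = v}" for j
  define S where "S = (\<Union>k<length Cs. (\<lambda>p. (k, p, 0::nat)) ` P k)"
  define B where "B = (\<Union>j<length Bs. (\<lambda>(p, c). (length Cs + j, p, c)) ` (R j \<times> {..<qs ! j}))"
  have fP: "finite (P k)" for k
    unfolding P_def by (rule finite_subset[of _ "{..length (snd (Cs ! k))}"]) auto
  have fR: "finite (R j)" for j
    unfolding R_def by (rule finite_subset[of _ "{..<length (snd (Bs ! j))}"]) auto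
  have "card S = (\<Sum>k<length Cs. card (P k))"
    unfolding S_def using fP
    by (subst card_UN_disjoint) (auto intro!: sum.cong card_image simp: inj_on_def)
  moreover have "card B = (\<Sum>j<length Bs. qs ! j * card (R j))"
    unfolding B_def using fR
    by (subst card_UN_disjoint)
      (auto intro!: sum.cong simp: card_image inj_on_def card_cartesian_product)
  moreover have "dimD Q Cs Bs qs v = (\<Sum>k<length Cs. card (P k)) + (\<Sum>j<length Bs. qs ! j * card (R j))"
    unfolding dimD_def P_def R_def by (simp add: sum_list_sum_nth atLeast0LessThan)
  moreover have "finite S" "finite B" "S \<inter> B = {}"
    unfolding S_def B_def using fP fR by auto
  ultimately show ?thesis
    unfolding dsum_basis_at_eq P_def[symmetric] R_def[symmetric] S_def[symmetric] B_def[symmetric]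
    by (simp add: card_Un_disjoint)
qed

definition dsum_enum :: "('v, 'a) bquiver \<Rightarrow> ('v, 'a) walk list \<Rightarrow> ('v, 'a) walk list \<Rightarrow> nat list \<Rightarrow>
    'v \<Rightarrow> nat \<Rightarrow> nat \<times> nat \<times> nat" where
  "dsum_enum Q Cs Bs qs v = (SOME e. bij_betw e {..<dimD Q Cs Bs qs v} (dsum_basis_at Q Cs Bs qs v))"

lemma bij_dsum_enum: "bij_betw (dsum_enum Q Cs Bs qs v) {..<dimD Q Cs Bs qs v} (dsum_basis_at Q Cs Bs qs v)"
proof -
  have "\<exists>e. bij_betw e {..<dimD Q Cs Bs qs v} (dsum_basis_at Q Cs Bs qs v)"
    using card_dsum_basis_at[of Q Cs Bs qs v]
    by (metis bij_betw_iff_card card_lessThan finite_lessThan)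
  then show ?thesis
    unfolding dsum_enum_def by (rule someI_ex)
qed

definition dsum_point :: "('v, 'a) bquiver \<Rightarrow> ('v, 'a) walk list \<Rightarrow> ('v, 'a) walk list \<Rightarrow> nat list \<Rightarrow>
    (nat \<Rightarrow> nat \<Rightarrow> nat \<Rightarrow> 'k::comm_ring_1) \<Rightarrow> ('a, 'k) point" where
  "dsum_point Q Cs Bs qs N = coef_point Q (dimD Q Cs Bs qs) (dsum_coef Cs Bs N) (dsum_enum Q Cs Bs qs)"

lemma dsum_coef_rel:
  assumes "\<forall>C\<in>set Cs. is_string Q C" "\<forall>j<length Bs. is_band Q (Bs ! j)" "(a, b) \<in> rels Q"
    and "x \<in> dsum_basis Cs Bs qs"
  shows "dsum_coef Cs Bs N b b1 x * dsum_coef Cs Bs N a x b2 = 0"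
proof -
  obtain k p c k' p' c' k'' p'' c'' where b: "b1 = (k, p, c)" "b2 = (k', p', c')" "x = (k'', p'', c'')"
    by (cases b1, cases b2, cases x) auto
  show ?thesis
  proof (cases "k = k'' \<and> k'' = k'")
    case True
    show ?thesis
    proof (cases "k'' < length Cs")
      case True
      then have "is_string Q (Cs ! k'')"
        using assms(1) by simp
      then show ?thesis
        using str_coef_rel[OF _ assms(3)] b \<open>k = k'' \<and> k'' = k'\<close> True by (simp add: dsum_coef_def)
    next
      case False
      then have "is_band Q (Bs ! (k'' - length Cs))"
        using assms(2,4) b by (auto simp: dsum_basis_def)
      then show ?thesis
        using band_coef_rel[OF _ assms(3)] b \<open>k = k'' \<and> k'' = k'\<close> False by (simp add: dsum_coef_def)
    qed
  qed (use b in \<open>auto simp: dsum_coef_def\<close>)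
qed

lemma dsum_point_modvar:
  assumes "gentle Q" "\<forall>C\<in>set Cs. is_string Q C" "\<forall>j<length Bs. is_band Q (Bs ! j)"
  shows "dsum_point Q Cs Bs qs N \<in> modvar Q (dimD Q Cs Bs qs)"
  unfolding dsum_point_def
proof (rule coef_point_modvar[OF assms(1), where Bv = "dsum_basis_at Q Cs Bs qs"])
  show "\<forall>v\<in>verts Q. bij_betw (dsum_enum Q Cs Bs qs v) {..<dimD Q Cs Bs qs v} (dsum_basis_at Q Cs Bs qs v)"
    by (simp add: bij_dsum_enum)
  fix a b x b1 b2 assume "(a, b) \<in> rels Q" "x \<in> dsum_basis_at Q Cs Bs qs (tgt Q a)"
  then show "dsum_coef Cs Bs N b b1 x * dsum_coef Cs Bs N a x b2 = 0"
    by (intro dsum_coef_rel[OF assms(2,3)]) (auto simp: dsum_basis_at_def)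
qed

definition inv_upper_triangular :: "nat \<Rightarrow> (nat \<Rightarrow> nat \<Rightarrow> 'k::zero) \<Rightarrow> bool" where
  "inv_upper_triangular n M \<longleftrightarrow> (\<forall>i<n. M i i \<noteq> 0 \<and> (\<forall>i'<i. M i i' = 0))"

definition dsum_family :: "('v, 'a) bquiver \<Rightarrow> ('v, 'a) walk list \<Rightarrow> ('v, 'a) walk list \<Rightarrow> nat list \<Rightarrow>
    ('a, 'k::comm_ring_1) point set" where
  "dsum_family Q Cs Bs qs = \<Union> {gl_orbit Q (dimD Q Cs Bs qs) (dsum_point Q Cs Bs qs N) | N.
     \<forall>j<length qs. inv_upper_triangular (qs ! j) (N j)}"

lemma dsum_family_modvar:
  assumes "gentle Q" "\<forall>C\<in>set Cs. is_string Q C" "\<forall>j<length Bs. is_band Q (Bs ! j)"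
  shows "dsum_family Q Cs Bs qs \<subseteq> modvar Q (dimD Q Cs Bs qs)"
  unfolding dsum_family_def using gl_orbit_modvar[OF assms(1) dsum_point_modvar[OF assms]] by blast

text \<open>An index \<open>c < sum_list ls\<close> is the pair (block number, offset inside the block) for the
  consecutive blocks of lengths \<open>ls\<close>.\<close>

definition block_offset :: "nat list \<Rightarrow> nat \<Rightarrow> nat" where
  "block_offset ls r = sum_list (take r ls)"

fun block_decode :: "nat list \<Rightarrow> nat \<Rightarrow> nat \<times> nat" where
  "block_decode [] c = (0, c)"
| "block_decode (l # ls) c =
    (if c < l then (0, c) else (case block_decode ls (c - l) of (r, c0) \<Rightarrow> (Suc r, c0)))"

lemma block_offset_Cons_0 [simp]: "block_offset (l # ls) 0 = 0"
  by (simp add: block_offset_def)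

lemma block_offset_Cons_Suc [simp]: "block_offset (l # ls) (Suc r) = l + block_offset ls r"
  by (simp add: block_offset_def)

lemma block_decode_offset:
  "r < length ls \<Longrightarrow> c0 < ls ! r \<Longrightarrow> block_decode ls (block_offset ls r + c0) = (r, c0)"
proof (induction ls arbitrary: r)
  case (Cons l ls)
  then show ?case
    by (cases r) simp_all
qed simp

lemma block_decode_bounds:
  assumes "c < sum_list ls"
  shows "fst (block_decode ls c) < length ls \<and> snd (block_decode ls c) < ls ! fst (block_decode ls c) \<and>
    block_offset ls (fst (block_decode ls c)) + snd (block_decode ls c) = c"
  using assms
proof (induction ls arbitrary: c)
  case (Cons l ls)
  show ?case
  proof (cases "c < l")
    case False
    then have "c - l < sum_list ls"
      using Cons.prems by simp
    from Cons.IH[OF this] False show ?thesis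
      by (auto split: prod.splits)
  qed simp
qed simp

lemma block_offset_bound:
  "r < length ls \<Longrightarrow> c0 < ls ! r \<Longrightarrow> block_offset ls r + c0 < sum_list ls"
proof (induction ls arbitrary: r)
  case (Cons l ls)
  then show ?case
    by (cases r) auto
qed simp

lemma block_offset_inj:
  "r < length ls \<Longrightarrow> c0 < ls ! r \<Longrightarrow> r' < length ls \<Longrightarrow> c0' < ls ! r' \<Longrightarrow>
    block_offset ls r + c0 = block_offset ls r' + c0' \<longleftrightarrow> r = r' \<and> c0 = c0'"
  by (metis block_decode_offset prod.inject)

lemma block_decodeE:
  assumes "c < sum_list ls"
  obtains r c0 where "r < length ls" "c0 < ls ! r" "c = block_offset ls r + c0"
  using block_decode_bounds[OF assms] by metis

lemma nth_concat_block_offset: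
  "r < length xss \<Longrightarrow> c0 < length (xss ! r) \<Longrightarrow>
    concat xss ! (block_offset (map length xss) r + c0) = xss ! r ! c0"
proof (induction xss arbitrary: r)
  case (Cons xs xss)
  show ?case
  proof (cases r)
    case (Suc r')
    then have "block_offset (map length xss) r' + c0 < length (concat xss)"
      using Cons.prems block_offset_bound[of r' "map length xss" c0] by (simp add: length_concat)
    then show ?thesis
      using Cons Suc by (simp add: nth_append)
  qed (use Cons in \<open>simp add: nth_append\<close>)
qed simp

section \<open>Direct sums of Jordan blocks\<close>

fun jordan_blocks :: "('k \<times> nat) list \<Rightarrow> nat \<Rightarrow> nat \<Rightarrow> 'k::field" where
  "jordan_blocks [] i i' = 0"
| "jordan_blocks ((lam, q) # ps) i i' =
    (if i < q \<and> i' < q then jordan lam i i'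
     else if q \<le> i \<and> q \<le> i' then jordan_blocks ps (i - q) (i' - q) else 0)"

lemma jordan_blocks_offset:
  "r < length ps \<Longrightarrow> r' < length ps \<Longrightarrow> c < snd (ps ! r) \<Longrightarrow> c' < snd (ps ! r') \<Longrightarrow>
    jordan_blocks ps (block_offset (map snd ps) r + c) (block_offset (map snd ps) r' + c') =
    (if r = r' then jordan (fst (ps ! r)) c c' else 0)"
proof (induction ps arbitrary: r r')
  case (Cons x ps)
  obtain lam q where "x = (lam, q)"
    by force
  with Cons show ?case
    by (cases r; cases r') auto
qed simp

lemma jordan_blocks_inv_upper_triangular:
  assumes "\<forall>(lam, q)\<in>set ps. lam \<noteq> 0"
  shows "inv_upper_triangular (sum_list (map snd ps)) (jordan_blocks ps)"
  unfolding inv_upper_triangular_def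
proof (intro allI impI conjI)
  fix i i' assume i: "i < sum_list (map snd ps)"
  then obtain r c where rc: "r < length ps" "c < snd (ps ! r)" "i = block_offset (map snd ps) r + c"
    by (auto elim: block_decodeE)
  have "fst (ps ! r) \<noteq> 0"
    using assms nth_mem[OF rc(1)] by (cases "ps ! r") auto
  then show "jordan_blocks ps i i \<noteq> 0"
    using jordan_blocks_offset[OF rc(1) rc(1) rc(2) rc(2)] rc(3) by (simp add: jordan_def)
  assume "i' < i"
  then have "i' < sum_list (map snd ps)"
    using i by simp
  then obtain r' c' where rc': "r' < length ps" "c' < snd (ps ! r')" "i' = block_offset (map snd ps) r' + c'"
    by (auto elim: block_decodeE)
  show "jordan_blocks ps i i' = 0"
    using jordan_blocks_offset[OF rc(1) rc'(1) rc(2) rc'(2)] rc rc' \<open>i' < i\<close>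
    by (cases "r = r'") (simp_all add: jordan_def)
qed

lemma jordan_matrix_eq_jordan_blocks:
  "i < sum_list (map fst ns) \<Longrightarrow> i' < sum_list (map fst ns) \<Longrightarrow>
    jordan_matrix ns $$ (i, i') = jordan_blocks (map prod.swap ns) i i'"
proof (induction ns arbitrary: i i')
  case (Cons na ns)
  obtain n a where na: "na = (n, a)"
    by force
  with Cons show ?case
    by (auto simp: jordan_matrix_Cons jordan_def)
qed simp

lemma index_mat_fun_conj:
  fixes P J P' :: "nat \<Rightarrow> nat \<Rightarrow> 'k::comm_ring_1"
  assumes "c < n" "c' < n"
  shows "(mat_fun n n P * mat_fun n n J * mat_fun n n P') $$ (c, c') =
    (\<Sum>c1<n. \<Sum>c2<n. P c c1 * J c1 c2 * P' c2 c')"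
proof -
  have "(mat_fun n n P * mat_fun n n J * mat_fun n n P') $$ (c, c') =
      mat_fun n n (mult_fun n (mult_fun n P J) P') $$ (c, c')"
    by (simp only: mat_fun_mult)
  also have "\<dots> = (\<Sum>c2<n. \<Sum>c1<n. P c c1 * J c1 c2 * P' c2 c')"
    using assms by (simp add: mult_fun_def sum_distrib_right)
  also have "\<dots> = (\<Sum>c1<n. \<Sum>c2<n. P c c1 * J c1 c2 * P' c2 c')"
    by (rule sum.swap)
  finally show ?thesis .
qed

lemma inv_upper_triangular_det_nonzero:
  fixes M :: "nat \<Rightarrow> nat \<Rightarrow> 'k::idom"
  assumes "inv_upper_triangular n M"
  shows "upper_triangular (mat_fun n n M)" "det (mat_fun n n M) \<noteq> 0"
proof -
  show ut: "upper_triangular (mat_fun n n M)"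
    using assms unfolding inv_upper_triangular_def upper_triangular_def by auto
  have "0 \<notin> set (diag_mat (mat_fun n n M))"
    using assms unfolding inv_upper_triangular_def diag_mat_def by auto
  then show "det (mat_fun n n M) \<noteq> 0"
    by (simp add: det_upper_triangular[OF ut mat_fun_carrier] prod_list_zero_iff)
qed

lemma jordan_matrix_det_nonzero_eigenvalue:
  fixes ns :: "(nat \<times> 'k::field) list"
  assumes "det (jordan_matrix ns) \<noteq> 0" "(q, lam) \<in> set ns" "q > 0"
  shows "lam \<noteq> 0"
proof
  assume "lam = 0"
  let ?J = "jordan_matrix ns" and ?n = "sum_list (map fst ns)"
  obtain r where r: "r < length ns" "ns ! r = (q, lam)"
    using assms(2) by (metis in_set_conv_nth)
  define i where "i = block_offset (map fst ns) r"
  have i: "i < ?n"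
    using block_offset_bound[of r "map fst ns" 0] r assms(3) unfolding i_def by simp
  have "?J $$ (i, i) = jordan lam 0 0"
    using jordan_blocks_offset[of r "map prod.swap ns" r 0 0] jordan_matrix_eq_jordan_blocks[OF i i]
      r assms(3) unfolding i_def by (simp add: comp_def)
  then have "0 \<in> set (diag_mat ?J)"
    using i \<open>lam = 0\<close> unfolding diag_mat_def by (force simp: jordan_def)
  moreover have "upper_triangular ?J"
    using jordan_matrix_upper_triangular[of _ ns] unfolding upper_triangular_def by simp
  ultimately have "det ?J = 0"
    using det_upper_triangular[of ?J ?n] by (simp add: prod_list_zero_iff)
  then show False
    using assms(1) by simp
qed

lemma inv_upper_triangular_similar_jordan_blocks:
  fixes M :: "nat \<Rightarrow> nat \<Rightarrow> 'k::field"
  assumes "inv_upper_triangular n M"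
  obtains ps P P' where "sum_list (map snd ps) = n" "\<forall>(lam, q)\<in>set ps. lam \<noteq> 0 \<and> q \<ge> 1"
    "inverse_mats n P P'" "\<forall>c<n. \<forall>c'<n. M c c' = (\<Sum>c1<n. \<Sum>c2<n. P c c1 * jordan_blocks ps c1 c2 * P' c2 c')"
proof -
  let ?A = "mat_fun n n M"
  define ns where "ns = triangular_to_jnf_vector ?A"
  define J where "J = jordan_matrix ns"
  have "jordan_nf ?A ns"
    unfolding ns_def using inv_upper_triangular_det_nonzero(1)[OF assms]
    by (intro triangular_to_jnf_vector) auto
  then have n0: "0 \<notin> fst ` set ns" and sim: "similar_mat ?A J"
    unfolding jordan_nf_def J_def by auto
  then obtain m P P' where c: "{?A, J, P, P'} \<subseteq> carrier_mat m m"
    and PP': "P * P' = 1\<^sub>m m" "P' * P = 1\<^sub>m m" and A: "?A = P * J * P'"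
    by (blast dest: similar_matD)
  have "m = n"
    using c by auto
  then have J: "J \<in> carrier_mat n n" and P: "P \<in> carrier_mat n n" and P': "P' \<in> carrier_mat n n"
    using c by auto
  have sn: "sum_list (map fst ns) = n"
    using J unfolding J_def by auto
  define ps where "ps = map prod.swap ns"
  have sum_ps: "sum_list (map snd ps) = n"
    using sn unfolding ps_def by (simp add: comp_def)
  have "det J \<noteq> 0"
    using det_similar[OF sim] inv_upper_triangular_det_nonzero(2)[OF assms] J by auto
  have ps_ok: "\<forall>(lam, q)\<in>set ps. lam \<noteq> 0 \<and> q \<ge> 1"
  proof (clarify)
    fix lam q assume "(lam, q) \<in> set ps"
    then have "(q, lam) \<in> set ns"
      unfolding ps_def by auto
    moreover from this have "q > 0"
      using n0 by (metis fst_conv gr0I image_eqI)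
    ultimately show "lam \<noteq> 0 \<and> q \<ge> 1"
      using jordan_matrix_det_nonzero_eigenvalue \<open>det J \<noteq> 0\<close> unfolding J_def by fastforce
  qed
  have mat_J: "mat_fun n n (jordan_blocks ps) = J"
    using J jordan_matrix_eq_jordan_blocks[of _ ns] sn unfolding J_def ps_def by (intro eq_matI) auto
  have "inverse_mats n (\<lambda>i j. P $$ (i, j)) (\<lambda>i j. P' $$ (i, j))"
    unfolding inverse_mats_iff using P P' PP' \<open>m = n\<close> by (simp add: mat_fun_of_mat)
  moreover have "M c c' = (\<Sum>c1<n. \<Sum>c2<n. P $$ (c, c1) * jordan_blocks ps c1 c2 * P' $$ (c2, c'))"
    if "c < n" "c' < n" for c c'
  proof -
    have "M c c' = (P * J * P') $$ (c, c')"
      using A that by (metis index_mat_fun)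
    then show ?thesis
      using index_mat_fun_conj[OF that, of "\<lambda>i j. P $$ (i, j)" "jordan_blocks ps" "\<lambda>i j. P' $$ (i, j)"]
      by (simp only: mat_fun_of_mat[OF P] mat_fun_of_mat[OF P'] mat_J)
  qed
  ultimately show ?thesis
    using that[OF sum_ps ps_ok] by blast
qed

text \<open>In \<open>comps Cs Bs parts\<close> the band \<open>B\<^sub>j\<close> occurs once for every Jordan block \<open>(\<lambda>, q)\<close> in \<open>parts ! j\<close>.
  Merging these summands sends basis vectors of \<open>comps Cs Bs parts\<close> to those of the direct sum in
  which \<open>B\<^sub>j\<close> occurs once, with the matrix \<open>jordan_blocks (parts ! j)\<close>.\<close>

definition merge_index :: "('v, 'a) walk list \<Rightarrow> ('k \<times> nat) list list \<Rightarrow> nat \<times> nat \<times> nat \<Rightarrow> nat \<times> nat \<times> nat" where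
  "merge_index Cs parts b = (case b of (k, p, c) \<Rightarrow>
     if k < length Cs then (k, p, c)
     else (case block_decode (map length parts) (k - length Cs) of (j, r) \<Rightarrow>
       (length Cs + j, p, block_offset (map snd (parts ! j)) r + c)))"

definition split_index :: "('v, 'a) walk list \<Rightarrow> ('k \<times> nat) list list \<Rightarrow> nat \<times> nat \<times> nat \<Rightarrow> nat \<times> nat \<times> nat" where
  "split_index Cs parts b = (case b of (k, p, c) \<Rightarrow>
     if k < length Cs then (k, p, c)
     else (case block_decode (map snd (parts ! (k - length Cs))) c of (r, c0) \<Rightarrow>
       (length Cs + block_offset (map length parts) (k - length Cs) + r, p, c0)))"

definition comps_basis_at :: "('v, 'a) bquiver \<Rightarrow> ('v, 'a) walk list \<Rightarrow> ('v, 'a) walk list \<Rightarrow>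
    ('k \<times> nat) list list \<Rightarrow> 'v \<Rightarrow> (nat \<times> nat \<times> nat) set" where
  "comps_basis_at Q Cs Bs parts v = {b \<in> basis (comps Cs Bs parts). bvert Q (comps Cs Bs parts) b = v}"

lemma comps_bands_length:
  assumes "length parts = length Bs"
  shows "map length (map (\<lambda>j. map (\<lambda>(lam, q). BandC (Bs ! j) lam q) (parts ! j)) [0..<length Bs]) =
    map length parts"
  using assms by (intro nth_equalityI) auto

lemma nth_comps_str: "k < length Cs \<Longrightarrow> comps Cs Bs parts ! k = StrC (Cs ! k)"
  unfolding comps_def by (simp add: nth_append)

lemma nth_comps_band:
  assumes "length parts = length Bs" "j < length Bs" "r < length (parts ! j)"
  shows "comps Cs Bs parts ! (length Cs + block_offset (map length parts) j + r) =
    BandC (Bs ! j) (fst (parts ! j ! r)) (snd (parts ! j ! r))"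
proof -
  let ?L = "map (\<lambda>j. map (\<lambda>(lam, q). BandC (Bs ! j) lam q) (parts ! j)) [0..<length Bs]"
  have "concat ?L ! (block_offset (map length ?L) j + r) = ?L ! j ! r"
    using assms(2,3) by (intro nth_concat_block_offset) auto
  then show ?thesis
    using assms unfolding comps_def comps_bands_length[OF assms(1)]
    by (simp add: nth_append add.assoc case_prod_beta)
qed

lemma length_comps:
  "length parts = length Bs \<Longrightarrow> length (comps Cs Bs parts) = length Cs + sum_list (map length parts)"
  unfolding comps_def by (simp add: length_concat comps_bands_length del: map_map)

lemma basis_comps_iff:
  assumes "length parts = length Bs"
  shows "(k, p, c) \<in> basis (comps Cs Bs parts) \<longleftrightarrow>
    (k < length Cs \<and> p \<le> length (snd (Cs ! k)) \<and> c = 0) \<or>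
    (\<exists>j r. j < length Bs \<and> r < length (parts ! j) \<and> k = length Cs + block_offset (map length parts) j + r \<and>
       p < length (snd (Bs ! j)) \<and> c < snd (parts ! j ! r))"
proof (cases "k < length Cs")
  case True
  then show ?thesis
    using length_comps[OF assms] by (auto simp: basis_def nth_comps_str)
next
  case False
  show ?thesis
  proof
    assume k: "(k, p, c) \<in> basis (comps Cs Bs parts)"
    then have "k < length (comps Cs Bs parts)"
      by (simp add: basis_def)
    then have "k - length Cs < sum_list (map length parts)"
      using False length_comps[OF assms, of Cs] by simp
    then obtain j r where "j < length (map length parts)" "r < map length parts ! j"
      "k - length Cs = block_offset (map length parts) j + r"
      by (rule block_decodeE)
    moreover from this have "k = length Cs + block_offset (map length parts) j + r"
      using False by simp
    moreover from calculation have "comps Cs Bs parts ! k = BandC (Bs ! j) (fst (parts ! j ! r)) (snd (parts ! j ! r))"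
      using assms nth_comps_band[of parts Bs j r Cs] by simp
    ultimately show "(k < length Cs \<and> p \<le> length (snd (Cs ! k)) \<and> c = 0) \<or>
      (\<exists>j r. j < length Bs \<and> r < length (parts ! j) \<and> k = length Cs + block_offset (map length parts) j + r \<and>
       p < length (snd (Bs ! j)) \<and> c < snd (parts ! j ! r))"
      using k False assms by (auto simp: basis_def)
  next
    assume "(k < length Cs \<and> p \<le> length (snd (Cs ! k)) \<and> c = 0) \<or>
      (\<exists>j r. j < length Bs \<and> r < length (parts ! j) \<and> k = length Cs + block_offset (map length parts) j + r \<and>
       p < length (snd (Bs ! j)) \<and> c < snd (parts ! j ! r))"
    then obtain j r where jr: "j < length Bs" "r < length (parts ! j)"
      "k = length Cs + block_offset (map length parts) j + r" "p < length (snd (Bs ! j))" "c < snd (parts ! j ! r)"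
      using False by blast
    moreover have "block_offset (map length parts) j + r < sum_list (map length parts)"
      using block_offset_bound[of j "map length parts" r] jr assms by simp
    ultimately show "(k, p, c) \<in> basis (comps Cs Bs parts)"
      using length_comps[OF assms] nth_comps_band[OF assms jr(1,2)] by (simp add: basis_def)
  qed
qed

lemma merge_index_band:
  assumes "length parts = length Bs" "j < length Bs" "r < length (parts ! j)"
  shows "merge_index Cs parts (length Cs + block_offset (map length parts) j + r, p, c) =
    (length Cs + j, p, block_offset (map snd (parts ! j)) r + c)"
  using block_decode_offset[of j "map length parts" r] assms by (simp add: merge_index_def add.assoc)

lemma split_index_band:
  assumes "r < length (parts ! j)" "c < snd (parts ! j ! r)"
  shows "split_index Cs parts (length Cs + j, p, block_offset (map snd (parts ! j)) r + c) =
    (length Cs + block_offset (map length parts) j + r, p, c)"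
  using block_decode_offset[of r "map snd (parts ! j)" c] assms by (simp add: split_index_def)

lemma dsum_basis_iff_parts:
  assumes "length parts = length Bs" "\<forall>j<length Bs. sum_list (map snd (parts ! j)) = qs ! j"
  shows "(k, p, c) \<in> dsum_basis Cs Bs qs \<longleftrightarrow> (k < length Cs \<and> p \<le> length (snd (Cs ! k)) \<and> c = 0) \<or>
    (\<exists>j r c0. j < length Bs \<and> r < length (parts ! j) \<and> k = length Cs + j \<and>
      c = block_offset (map snd (parts ! j)) r + c0 \<and> p < length (snd (Bs ! j)) \<and> c0 < snd (parts ! j ! r))"
proof -
  have copies: "c < qs ! j \<longleftrightarrow> (\<exists>r c0. r < length (parts ! j) \<and> c = block_offset (map snd (parts ! j)) r + c0 \<and>
      c0 < snd (parts ! j ! r))" if "j < length Bs" for j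
  proof
    assume "c < qs ! j"
    then have "c < sum_list (map snd (parts ! j))"
      using assms(2) that by simp
    then obtain r c0 where "r < length (map snd (parts ! j))" "c0 < map snd (parts ! j) ! r"
      "c = block_offset (map snd (parts ! j)) r + c0"
      by (rule block_decodeE)
    then show "\<exists>r c0. r < length (parts ! j) \<and> c = block_offset (map snd (parts ! j)) r + c0 \<and> c0 < snd (parts ! j ! r)"
      by auto
  next
    assume "\<exists>r c0. r < length (parts ! j) \<and> c = block_offset (map snd (parts ! j)) r + c0 \<and> c0 < snd (parts ! j ! r)"
    then show "c < qs ! j"
      using assms(2) that block_offset_bound[of _ "map snd (parts ! j)"] by force
  qed
  show ?thesis
  proof (cases "k < length Cs")
    case False
    then have "k = length Cs + (k - length Cs)"
      by simp
    then show ?thesis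
      using False copies[of "k - length Cs"] unfolding dsum_basis_def by auto
  qed (auto simp: dsum_basis_def)
qed

lemma bvert_comps_str: "k < length Cs \<Longrightarrow> bvert Q (comps Cs Bs parts) (k, p, c) = wvert Q (fst (Cs ! k)) (snd (Cs ! k)) p"
  by (simp add: bvert_def nth_comps_str)

lemma bvert_comps_band:
  "length parts = length Bs \<Longrightarrow> j < length Bs \<Longrightarrow> r < length (parts ! j) \<Longrightarrow>
    bvert Q (comps Cs Bs parts) (length Cs + block_offset (map length parts) j + r, p, c) =
    wvert Q (fst (Bs ! j)) (snd (Bs ! j)) p"
  by (simp add: bvert_def nth_comps_band)

lemma merge_index_in_dsum_basis:
  assumes "length parts = length Bs" "\<forall>j<length Bs. sum_list (map snd (parts ! j)) = qs ! j"
    and "b \<in> basis (comps Cs Bs parts)"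
  shows "merge_index Cs parts b \<in> dsum_basis Cs Bs qs"
    "split_index Cs parts (merge_index Cs parts b) = b"
    "dsum_vert Q Cs Bs (merge_index Cs parts b) = bvert Q (comps Cs Bs parts) b"
proof -
  obtain k p c where b: "b = (k, p, c)"
    by (cases b)
  have "(k, p, c) \<in> basis (comps Cs Bs parts)"
    using assms(3) b by simp
  then have "(merge_index Cs parts (k, p, c) \<in> dsum_basis Cs Bs qs \<and>
      split_index Cs parts (merge_index Cs parts (k, p, c)) = (k, p, c)) \<and>
      dsum_vert Q Cs Bs (merge_index Cs parts (k, p, c)) = bvert Q (comps Cs Bs parts) (k, p, c)"
    unfolding basis_comps_iff[OF assms(1)]
  proof (elim disjE exE conjE)
    assume "k < length Cs" "p \<le> length (snd (Cs ! k))" "c = 0"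
    then show ?thesis
      by (simp add: merge_index_def split_index_def dsum_basis_def dsum_vert_def bvert_comps_str)
  next
    fix j r assume jr: "j < length Bs" "r < length (parts ! j)" "k = length Cs + block_offset (map length parts) j + r"
      "p < length (snd (Bs ! j))" "c < snd (parts ! j ! r)"
    have "merge_index Cs parts (k, p, c) = (length Cs + j, p, block_offset (map snd (parts ! j)) r + c)"
      unfolding jr(3) by (rule merge_index_band[OF assms(1) jr(1,2)])
    moreover have "(length Cs + j, p, block_offset (map snd (parts ! j)) r + c) \<in> dsum_basis Cs Bs qs"
      unfolding dsum_basis_iff_parts[OF assms(1,2)] using jr by (intro disjI2 exI[of _ j] exI[of _ r] exI[of _ c]) simp
    moreover have "split_index Cs parts (length Cs + j, p, block_offset (map snd (parts ! j)) r + c) = (k, p, c)"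
      unfolding jr(3) by (rule split_index_band[OF jr(2,5)])
    moreover have "bvert Q (comps Cs Bs parts) (k, p, c) = wvert Q (fst (Bs ! j)) (snd (Bs ! j)) p"
      unfolding jr(3) by (rule bvert_comps_band[OF assms(1) jr(1,2)])
    ultimately show ?thesis
      by (simp add: dsum_vert_def)
  qed
  then show "merge_index Cs parts b \<in> dsum_basis Cs Bs qs" "split_index Cs parts (merge_index Cs parts b) = b"
    "dsum_vert Q Cs Bs (merge_index Cs parts b) = bvert Q (comps Cs Bs parts) b"
    using b by auto
qed

lemma split_index_in_basis_comps:
  assumes "length parts = length Bs" "\<forall>j<length Bs. sum_list (map snd (parts ! j)) = qs ! j"
    and "b \<in> dsum_basis Cs Bs qs"
  shows "split_index Cs parts b \<in> basis (comps Cs Bs parts)" "merge_index Cs parts (split_index Cs parts b) = b"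
proof -
  obtain k p c where b: "b = (k, p, c)"
    by (cases b)
  have "(k, p, c) \<in> dsum_basis Cs Bs qs"
    using assms(3) b by simp
  then have "split_index Cs parts (k, p, c) \<in> basis (comps Cs Bs parts) \<and>
      merge_index Cs parts (split_index Cs parts (k, p, c)) = (k, p, c)"
    unfolding dsum_basis_iff_parts[OF assms(1,2)]
  proof (elim disjE exE conjE)
    assume "k < length Cs" "p \<le> length (snd (Cs ! k))" "c = 0"
    then show ?thesis
      by (simp add: merge_index_def split_index_def basis_comps_iff[OF assms(1)])
  next
    fix j r c0 assume jr: "j < length Bs" "r < length (parts ! j)" "k = length Cs + j"
      "c = block_offset (map snd (parts ! j)) r + c0" "p < length (snd (Bs ! j))" "c0 < snd (parts ! j ! r)"
    have "split_index Cs parts (k, p, c) = (length Cs + block_offset (map length parts) j + r, p, c0)"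
      unfolding jr(3,4) by (rule split_index_band[OF jr(2,6)])
    moreover have "(length Cs + block_offset (map length parts) j + r, p, c0) \<in> basis (comps Cs Bs parts)"
      unfolding basis_comps_iff[OF assms(1)] using jr by (intro disjI2 exI[of _ j] exI[of _ r]) simp
    moreover have "merge_index Cs parts (length Cs + block_offset (map length parts) j + r, p, c0) = (k, p, c)"
      unfolding jr(3,4) by (rule merge_index_band[OF assms(1) jr(1,2)])
    ultimately show ?thesis
      by simp
  qed
  then show "split_index Cs parts b \<in> basis (comps Cs Bs parts)" "merge_index Cs parts (split_index Cs parts b) = b"
    using b by auto
qed

lemma bij_merge_index:
  assumes "length parts = length Bs" "\<forall>j<length Bs. sum_list (map snd (parts ! j)) = qs ! j"
  shows "bij_betw (merge_index Cs parts) (comps_basis_at Q Cs Bs parts v) (dsum_basis_at Q Cs Bs qs v)"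
proof (rule bij_betw_byWitness[where f' = "split_index Cs parts"])
  show "\<forall>b\<in>comps_basis_at Q Cs Bs parts v. split_index Cs parts (merge_index Cs parts b) = b"
    using merge_index_in_dsum_basis(2)[OF assms] unfolding comps_basis_at_def by blast
  show "\<forall>b\<in>dsum_basis_at Q Cs Bs qs v. merge_index Cs parts (split_index Cs parts b) = b"
    using split_index_in_basis_comps(2)[OF assms] unfolding dsum_basis_at_def by blast
  show "merge_index Cs parts ` comps_basis_at Q Cs Bs parts v \<subseteq> dsum_basis_at Q Cs Bs qs v"
  proof (rule image_subsetI)
    fix b assume "b \<in> comps_basis_at Q Cs Bs parts v"
    then have "b \<in> basis (comps Cs Bs parts)" "bvert Q (comps Cs Bs parts) b = v"
      unfolding comps_basis_at_def by auto
    then show "merge_index Cs parts b \<in> dsum_basis_at Q Cs Bs qs v"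
      using merge_index_in_dsum_basis(1,3)[OF assms] unfolding dsum_basis_at_def by simp
  qed
  show "split_index Cs parts ` dsum_basis_at Q Cs Bs qs v \<subseteq> comps_basis_at Q Cs Bs parts v"
  proof (rule image_subsetI)
    fix b assume "b \<in> dsum_basis_at Q Cs Bs qs v"
    then have b: "b \<in> dsum_basis Cs Bs qs" "dsum_vert Q Cs Bs b = v"
      unfolding dsum_basis_at_def by auto
    have b': "split_index Cs parts b \<in> basis (comps Cs Bs parts)"
      by (rule split_index_in_basis_comps(1)[OF assms b(1)])
    have "bvert Q (comps Cs Bs parts) (split_index Cs parts b) = dsum_vert Q Cs Bs b"
      using merge_index_in_dsum_basis(3)[OF assms b'] split_index_in_basis_comps(2)[OF assms b(1)] by simp
    then show "split_index Cs parts b \<in> comps_basis_at Q Cs Bs parts v"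
      using b b' unfolding comps_basis_at_def by simp
  qed
qed

lemma band_coef_cong:
  "M c c' = M' x x' \<Longrightarrow> (c = c') = (x = x') \<Longrightarrow> band_coef B M a p c p' c' = band_coef B M' a p x p' x'"
  unfolding band_coef_def by (intro sum.cong) auto

lemma band_coef_zero: "M c c' = 0 \<Longrightarrow> c \<noteq> c' \<Longrightarrow> band_coef B M a p c p' c' = 0"
  unfolding band_coef_def by (intro sum.neutral) auto

lemma coef_comps_band_band:
  assumes "length parts = length Bs"
    and jr: "j < length Bs" "r < length (parts ! j)" "c < snd (parts ! j ! r)"
    and jr': "j' < length Bs" "r' < length (parts ! j')" "c' < snd (parts ! j' ! r')"
  shows "coef (comps Cs Bs parts) a (length Cs + block_offset (map length parts) j + r, p, c)
      (length Cs + block_offset (map length parts) j' + r', p', c') =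
    dsum_coef Cs Bs (\<lambda>j. jordan_blocks (parts ! j)) a (length Cs + j, p, block_offset (map snd (parts ! j)) r + c)
      (length Cs + j', p', block_offset (map snd (parts ! j')) r' + c')"
proof (cases "j = j'")
  case False
  moreover have "block_offset (map length parts) j + r \<noteq> block_offset (map length parts) j' + r'"
    using block_offset_inj[of j "map length parts" r j' r'] jr jr' assms(1) False by simp
  ultimately show ?thesis
    by (simp add: coef_eq dsum_coef_def)
next
  case True
  let ?ps = "parts ! j"
  have offsets: "block_offset (map snd ?ps) r + c = block_offset (map snd ?ps) r' + c' \<longleftrightarrow> r = r' \<and> c = c'"
    using block_offset_inj[of r "map snd ?ps" c r' c'] jr jr' True by simp
  have blocks: "jordan_blocks ?ps (block_offset (map snd ?ps) r + c) (block_offset (map snd ?ps) r' + c') =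
      (if r = r' then jordan (fst (?ps ! r)) c c' else 0)"
    using jordan_blocks_offset[of r ?ps r' c c'] jr jr' True by simp
  show ?thesis
  proof (cases "r = r'")
    case False
    then have "band_coef (Bs ! j) (jordan_blocks ?ps) a p (block_offset (map snd ?ps) r + c) p'
        (block_offset (map snd ?ps) r' + c') = 0"
      using offsets blocks by (intro band_coef_zero) auto
    then show ?thesis
      using True False by (simp add: coef_eq dsum_coef_def)
  next
    case r: True
    have "band_coef (Bs ! j) (jordan (fst (?ps ! r))) a p c p' c' = band_coef (Bs ! j) (jordan_blocks ?ps) a p
        (block_offset (map snd ?ps) r + c) p' (block_offset (map snd ?ps) r' + c')"
      using offsets blocks r by (intro band_coef_cong) auto
    then show ?thesis
      using True r nth_comps_band[OF assms(1) jr(1,2), of Cs] by (simp add: coef_eq dsum_coef_def)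
  qed
qed

lemma coef_comps_eq_dsum_coef:
  assumes "length parts = length Bs" "b \<in> basis (comps Cs Bs parts)" "b' \<in> basis (comps Cs Bs parts)"
  shows "coef (comps Cs Bs parts) a b b' =
    dsum_coef Cs Bs (\<lambda>j. jordan_blocks (parts ! j)) a (merge_index Cs parts b) (merge_index Cs parts b')"
proof -
  obtain k p c k' p' c' where b: "b = (k, p, c)" "b' = (k', p', c')"
    by (cases b, cases b') auto
  have "(k, p, c) \<in> basis (comps Cs Bs parts)" "(k', p', c') \<in> basis (comps Cs Bs parts)"
    using assms(2,3) b by auto
  then have "coef (comps Cs Bs parts) a (k, p, c) (k', p', c') = dsum_coef Cs Bs (\<lambda>j. jordan_blocks (parts ! j)) a
      (merge_index Cs parts (k, p, c)) (merge_index Cs parts (k', p', c'))"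
    unfolding basis_comps_iff[OF assms(1)]
  proof (elim disjE exE conjE)
    assume "k < length Cs" "k' < length Cs"
    then show ?thesis
      by (simp add: coef_eq dsum_coef_def merge_index_def nth_comps_str)
  next
    fix j' r' assume "k < length Cs" "j' < length Bs" "r' < length (parts ! j')"
      "k' = length Cs + block_offset (map length parts) j' + r'"
    then show ?thesis
      using merge_index_band[OF assms(1), of j' r' Cs p' c'] by (simp add: coef_eq dsum_coef_def merge_index_def)
  next
    fix j r assume "k' < length Cs" "j < length Bs" "r < length (parts ! j)"
      "k = length Cs + block_offset (map length parts) j + r"
    then show ?thesis
      using merge_index_band[OF assms(1), of j r Cs p c] by (simp add: coef_eq dsum_coef_def merge_index_def)
  next
    fix j r j' r'
    assume jr: "j < length Bs" "r < length (parts ! j)" "k = length Cs + block_offset (map length parts) j + r"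
      "c < snd (parts ! j ! r)"
    assume jr': "j' < length Bs" "r' < length (parts ! j')" "k' = length Cs + block_offset (map length parts) j' + r'"
      "c' < snd (parts ! j' ! r')"
    show ?thesis
      unfolding jr(3) jr'(3) merge_index_band[OF assms(1) jr(1,2)] merge_index_band[OF assms(1) jr'(1,2)]
      by (rule coef_comps_band_band[OF assms(1) jr(1,2,4) jr'(1,2,4)])
  qed
  then show ?thesis
    using b by simp
qed

lemma rep_point_comps_eq:
  assumes ends: "\<forall>a\<in>arrs Q. src Q a \<in> verts Q \<and> tgt Q a \<in> verts Q" and "length parts = length Bs"
    and e: "\<And>v i. v \<in> verts Q \<Longrightarrow> i < d v \<Longrightarrow> e v i \<in> basis (comps Cs Bs parts)"
  shows "rep_point Q d (comps Cs Bs parts) e =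
    coef_point Q d (dsum_coef Cs Bs (\<lambda>j. jordan_blocks (parts ! j))) (\<lambda>v i. merge_index Cs parts (e v i))"
  unfolding rep_point_eq_coef_point coef_point_def
  using coef_comps_eq_dsum_coef[OF assms(2) e e] ends by (intro ext) auto

definition jordan_partitions :: "nat list \<Rightarrow> ('k::zero \<times> nat) list list \<Rightarrow> bool" where
  "jordan_partitions qs parts \<longleftrightarrow> length parts = length qs \<and>
     (\<forall>j<length qs. (\<forall>(lam, q)\<in>set (parts ! j). lam \<noteq> 0 \<and> q \<ge> 1) \<and> sum_list (map snd (parts ! j)) = qs ! j)"

lemma famO_eq:
  assumes "length qs = length Bs"
  shows "famO Q Cs Bs qs = \<Union> {gl_orbit Q (dimD Q Cs Bs qs) (rep_point Q (dimD Q Cs Bs qs) (comps Cs Bs parts) e) |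
    parts e. jordan_partitions qs parts \<and>
      (\<forall>v\<in>verts Q. bij_betw (e v) {..<dimD Q Cs Bs qs v} (comps_basis_at Q Cs Bs parts v))}"
  using assms unfolding famO_def jordan_partitions_def comps_basis_at_def Let_def by auto

lemma rep_point_comps_in_gl_orbit:
  assumes "gentle Q" "length qs = length Bs" "jordan_partitions qs parts"
    and e: "\<forall>v\<in>verts Q. bij_betw (e v) {..<dimD Q Cs Bs qs v} (comps_basis_at Q Cs Bs parts v)"
  shows "rep_point Q (dimD Q Cs Bs qs) (comps Cs Bs parts) e \<in>
    gl_orbit Q (dimD Q Cs Bs qs) (dsum_point Q Cs Bs qs (\<lambda>j. jordan_blocks (parts ! j)))"
proof -
  have ends: "\<forall>a\<in>arrs Q. src Q a \<in> verts Q \<and> tgt Q a \<in> verts Q"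
    using gentle_arr_verts[OF assms(1)] by blast
  have lp: "length parts = length Bs" and sums: "\<forall>j<length Bs. sum_list (map snd (parts ! j)) = qs ! j"
    using assms(2,3) unfolding jordan_partitions_def by auto
  have "\<forall>v\<in>verts Q. bij_betw (\<lambda>i. merge_index Cs parts (e v i)) {..<dimD Q Cs Bs qs v} (dsum_basis_at Q Cs Bs qs v)"
  proof
    fix v assume "v \<in> verts Q"
    then have "bij_betw (merge_index Cs parts \<circ> e v) {..<dimD Q Cs Bs qs v} (dsum_basis_at Q Cs Bs qs v)"
      using e by (intro bij_betw_trans[OF _ bij_merge_index[OF lp sums]]) blast
    then show "bij_betw (\<lambda>i. merge_index Cs parts (e v i)) {..<dimD Q Cs Bs qs v} (dsum_basis_at Q Cs Bs qs v)"
      by (simp add: comp_def)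
  qed
  moreover have "rep_point Q (dimD Q Cs Bs qs) (comps Cs Bs parts) e =
      coef_point Q (dimD Q Cs Bs qs) (dsum_coef Cs Bs (\<lambda>j. jordan_blocks (parts ! j))) (\<lambda>v i. merge_index Cs parts (e v i))"
    using e by (intro rep_point_comps_eq[OF ends lp]) (auto simp: comps_basis_at_def dest: bij_betwE)
  ultimately show ?thesis
    unfolding dsum_point_def using ends bij_dsum_enum by (auto intro!: coef_point_reenumerate)
qed

lemma dsum_point_jordan_blocks_eq_rep_point:
  assumes "gentle Q" "length qs = length Bs" "jordan_partitions qs parts"
  obtains e where "\<forall>v\<in>verts Q. bij_betw (e v) {..<dimD Q Cs Bs qs v} (comps_basis_at Q Cs Bs parts v)"
    "rep_point Q (dimD Q Cs Bs qs) (comps Cs Bs parts) e = dsum_point Q Cs Bs qs (\<lambda>j. jordan_blocks (parts ! j))"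
proof -
  have ends: "\<forall>a\<in>arrs Q. src Q a \<in> verts Q \<and> tgt Q a \<in> verts Q"
    using gentle_arr_verts[OF assms(1)] by blast
  have lp: "length parts = length Bs" and sums: "\<forall>j<length Bs. sum_list (map snd (parts ! j)) = qs ! j"
    using assms(2,3) unfolding jordan_partitions_def by auto
  define e where "e v i = inv_into (comps_basis_at Q Cs Bs parts v) (merge_index Cs parts) (dsum_enum Q Cs Bs qs v i)"
    for v i
  have e_bij: "bij_betw (e v) {..<dimD Q Cs Bs qs v} (comps_basis_at Q Cs Bs parts v)" for v
    unfolding e_def using bij_betw_trans[OF bij_dsum_enum bij_betw_inv_into[OF bij_merge_index[OF lp sums]]]
    by (simp add: comp_def)
  have merge_e: "merge_index Cs parts (e v i) = dsum_enum Q Cs Bs qs v i" if "i < dimD Q Cs Bs qs v" for v i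
  proof -
    have "dsum_enum Q Cs Bs qs v i \<in> merge_index Cs parts ` comps_basis_at Q Cs Bs parts v"
      using bij_betwE[OF bij_dsum_enum[of Q Cs Bs qs v]] that
        bij_betw_imp_surj_on[OF bij_merge_index[OF lp sums, of Cs Q v]] by auto
    then show ?thesis
      unfolding e_def by (rule f_inv_into_f)
  qed
  have "e v i \<in> basis (comps Cs Bs parts)" if "i < dimD Q Cs Bs qs v" for v i
    using bij_betwE[OF e_bij] that unfolding comps_basis_at_def by blast
  then have "rep_point Q (dimD Q Cs Bs qs) (comps Cs Bs parts) e =
      coef_point Q (dimD Q Cs Bs qs) (dsum_coef Cs Bs (\<lambda>j. jordan_blocks (parts ! j))) (\<lambda>v i. merge_index Cs parts (e v i))"
    by (intro rep_point_comps_eq[OF ends lp])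
  also have "\<dots> = dsum_point Q Cs Bs qs (\<lambda>j. jordan_blocks (parts ! j))"
    unfolding dsum_point_def by (intro ext) (simp add: coef_point_def merge_e)
  finally have "rep_point Q (dimD Q Cs Bs qs) (comps Cs Bs parts) e = dsum_point Q Cs Bs qs (\<lambda>j. jordan_blocks (parts ! j))" .
  then show ?thesis
    using e_bij that by blast
qed

lemma jordan_partitions_inv_upper_triangular:
  "jordan_partitions qs parts \<Longrightarrow> \<forall>j<length qs. inv_upper_triangular (qs ! j) (jordan_blocks (parts ! j))"
  unfolding jordan_partitions_def using jordan_blocks_inv_upper_triangular by fastforce

lemma famO_subset_dsum_family:
  assumes "gentle Q" "length qs = length Bs"
  shows "famO Q Cs Bs qs \<subseteq> dsum_family Q Cs Bs qs"
proof
  fix x assume "x \<in> famO Q Cs Bs qs"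
  then obtain parts e where parts: "jordan_partitions qs parts"
    and e: "\<forall>v\<in>verts Q. bij_betw (e v) {..<dimD Q Cs Bs qs v} (comps_basis_at Q Cs Bs parts v)"
    and x: "x \<in> gl_orbit Q (dimD Q Cs Bs qs) (rep_point Q (dimD Q Cs Bs qs) (comps Cs Bs parts) e)"
    unfolding famO_eq[OF assms(2)] by blast
  have "x \<in> gl_orbit Q (dimD Q Cs Bs qs) (dsum_point Q Cs Bs qs (\<lambda>j. jordan_blocks (parts ! j)))"
    using gl_orbit_trans[OF rep_point_comps_in_gl_orbit[OF assms parts e] x] .
  then show "x \<in> dsum_family Q Cs Bs qs"
    unfolding dsum_family_def using jordan_partitions_inv_upper_triangular[OF parts] by blast
qed

lemma band_coef_conj:
  fixes P P' M M' :: "nat \<Rightarrow> nat \<Rightarrow> 'k::comm_ring_1"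
  assumes cc: "c < q" "c' < q" and inv: "inverse_mats q P P'"
    and M': "M' c c' = (\<Sum>c1<q. \<Sum>c2<q. P c c1 * M c1 c2 * P' c2 c')"
  shows "(\<Sum>c1<q. P c c1 * (\<Sum>c2<q. band_coef B M a p c1 p' c2 * P' c2 c')) = band_coef B M' a p c p' c'"
proof -
  let ?m = "length (snd B)"
  define cond where "cond i \<longleftrightarrow> (snd B ! i = Dir a \<and> p' = i \<and> p = Suc i mod ?m) \<or>
      (snd B ! i = Inv a \<and> p' = Suc i mod ?m \<and> p = i)" for i
  define T where "T X i c1 c2 = (if cond i then (if i = 0 then X c1 c2 else if c1 = c2 then 1 else 0) else 0)"
    for X :: "nat \<Rightarrow> nat \<Rightarrow> 'k" and i c1 c2
  have bc: "band_coef B X a p x p' y = (\<Sum>i<?m. T X i x y)" for X x y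
    unfolding band_coef_def cond_def T_def by simp
  have letter: "(\<Sum>c1<q. \<Sum>c2<q. P c c1 * T M i c1 c2 * P' c2 c') = T M' i c c'" for i
  proof (cases "cond i \<and> i \<noteq> 0")
    case True
    have "(\<Sum>c1<q. \<Sum>c2<q. P c c1 * T M i c1 c2 * P' c2 c') = (\<Sum>c1<q. P c c1 * P' c1 c')"
      using True by (simp add: T_def if_distrib[where f = "\<lambda>y. _ * y * _"] cong: if_cong)
    also have "\<dots> = (if c = c' then 1 else 0)"
      using inv cc unfolding inverse_mats_def by blast
    finally show ?thesis
      using True by (simp add: T_def)
  qed (use M' in \<open>auto simp: T_def\<close>)
  have "(\<Sum>c1<q. P c c1 * (\<Sum>c2<q. band_coef B M a p c1 p' c2 * P' c2 c')) =
      (\<Sum>c1<q. \<Sum>c2<q. \<Sum>i<?m. P c c1 * T M i c1 c2 * P' c2 c')"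
    unfolding bc by (simp add: sum_distrib_left sum_distrib_right mult.assoc)
  also have "\<dots> = (\<Sum>i<?m. \<Sum>c1<q. \<Sum>c2<q. P c c1 * T M i c1 c2 * P' c2 c')"
    by (subst sum.swap) (simp add: sum.swap[of _ "{..<q}" "{..<?m}"])
  also have "\<dots> = band_coef B M' a p c p' c'"
    unfolding bc letter ..
  finally show ?thesis .
qed

text \<open>The base change acting by \<open>P j\<close> on the copies of every position of the band \<open>B\<^sub>j\<close>, and trivially
  on the strings.\<close>

definition block_change :: "('v, 'a) walk list \<Rightarrow> (nat \<Rightarrow> nat \<Rightarrow> nat \<Rightarrow> 'k::comm_ring_1) \<Rightarrow>
    nat \<times> nat \<times> nat \<Rightarrow> nat \<times> nat \<times> nat \<Rightarrow> 'k" where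
  "block_change Cs P b b' = (case (b, b') of ((k, p, c), (k', p', c')) \<Rightarrow>
     if k = k' \<and> p = p' then (if length Cs \<le> k then P (k - length Cs) c c' else if c = c' then 1 else 0)
     else 0)"

lemma block_change_transpose: "block_change Cs P b b' = block_change Cs (\<lambda>j c c'. P j c' c) b' b"
  by (auto simp: block_change_def split: prod.splits)

lemma dsum_basis_at_fiber:
  assumes "(k, p, c) \<in> dsum_basis_at Q Cs Bs qs v"
  shows "{x \<in> dsum_basis_at Q Cs Bs qs v. fst x = k \<and> fst (snd x) = p} =
    (if k < length Cs then {(k, p, c)} else (\<lambda>c'. (k, p, c')) ` {..<qs ! (k - length Cs)})"
  using assms by (auto simp: dsum_basis_at_def dsum_basis_def dsum_vert_def)

lemma sum_block_change_left:
  assumes b: "(k, p, c) \<in> dsum_basis_at Q Cs Bs qs v"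
  shows "(\<Sum>x\<in>dsum_basis_at Q Cs Bs qs v. block_change Cs P (k, p, c) x * F x) =
    (if k < length Cs then F (k, p, c) else (\<Sum>c'<qs ! (k - length Cs). P (k - length Cs) c c' * F (k, p, c')))"
proof -
  let ?B = "dsum_basis_at Q Cs Bs qs v"
  have "(\<Sum>x\<in>?B. block_change Cs P (k, p, c) x * F x) =
      (\<Sum>x\<in>{x \<in> ?B. fst x = k \<and> fst (snd x) = p}. block_change Cs P (k, p, c) x * F x)"
    using card_dsum_basis_at[of Q Cs Bs qs v]
    by (intro sum.mono_neutral_right) (auto simp: block_change_def split: prod.splits)
  also have "\<dots> = (if k < length Cs then F (k, p, c)
      else (\<Sum>c'<qs ! (k - length Cs). P (k - length Cs) c c' * F (k, p, c')))"
    unfolding dsum_basis_at_fiber[OF b]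
    by (auto simp: block_change_def sum.reindex inj_on_def)
  finally show ?thesis .
qed

lemma sum_block_change_right:
  assumes "(k, p, c) \<in> dsum_basis_at Q Cs Bs qs v"
  shows "(\<Sum>x\<in>dsum_basis_at Q Cs Bs qs v. F x * block_change Cs P x (k, p, c)) =
    (if k < length Cs then F (k, p, c) else (\<Sum>c'<qs ! (k - length Cs). F (k, p, c') * P (k - length Cs) c' c))"
  using sum_block_change_left[OF assms, of "\<lambda>j c c'. P j c' c" F]
  by (simp add: block_change_transpose[of Cs P] mult.commute)

lemma block_change_inverse:
  assumes inv: "\<forall>j<length Bs. inverse_mats (qs ! j) (P j) (P' j)"
    and b: "b \<in> dsum_basis_at Q Cs Bs qs v" and b': "b' \<in> dsum_basis_at Q Cs Bs qs v"
  shows "(\<Sum>x\<in>dsum_basis_at Q Cs Bs qs v. block_change Cs P b x * block_change Cs P' x b') =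
    (if b = b' then 1 else 0)"
proof -
  obtain k p c k' p' c' where kb: "b = (k, p, c)" "b' = (k', p', c')"
    by (cases b, cases b') auto
  show ?thesis
  proof (cases "k < length Cs \<or> k \<noteq> k' \<or> p \<noteq> p'")
    case True
    then show ?thesis
      unfolding kb sum_block_change_left[OF b[unfolded kb]] by (auto simp: block_change_def)
  next
    case False
    then have "k - length Cs < length Bs" "c < qs ! (k - length Cs)" "c' < qs ! (k - length Cs)"
      using b b' kb by (auto simp: dsum_basis_at_def dsum_basis_def)
    moreover have "(\<Sum>c''<qs ! (k - length Cs). P (k - length Cs) c c'' * block_change Cs P' (k, p, c'') (k', p', c')) =
        (\<Sum>c''<qs ! (k - length Cs). P (k - length Cs) c c'' * P' (k - length Cs) c'' c')"
      using False by (intro sum.cong) (auto simp: block_change_def)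
    ultimately show ?thesis
      unfolding kb sum_block_change_left[OF b[unfolded kb]] using False inv unfolding inverse_mats_def by auto
  qed
qed

lemma dsum_coef_conj:
  assumes inv: "\<forall>j<length Bs. inverse_mats (qs ! j) (P j) (P' j)"
    and NJ: "\<forall>j<length Bs. \<forall>c<qs ! j. \<forall>c'<qs ! j.
      N j c c' = (\<Sum>c1<qs ! j. \<Sum>c2<qs ! j. P j c c1 * J j c1 c2 * P' j c2 c')"
    and b: "b \<in> dsum_basis_at Q Cs Bs qs v" and b': "b' \<in> dsum_basis_at Q Cs Bs qs w"
  shows "dsum_coef Cs Bs N a b b' = (\<Sum>x\<in>dsum_basis_at Q Cs Bs qs v. \<Sum>x'\<in>dsum_basis_at Q Cs Bs qs w.
    block_change Cs P b x * dsum_coef Cs Bs J a x x' * block_change Cs P' x' b')"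
proof -
  obtain k p c k' p' c' where kb: "b = (k, p, c)" "b' = (k', p', c')"
    by (cases b, cases b') auto
  define H where "H x = (if k' < length Cs then dsum_coef Cs Bs J a x (k', p', c')
      else (\<Sum>c2<qs ! (k' - length Cs). dsum_coef Cs Bs J a x (k', p', c2) * P' (k' - length Cs) c2 c'))" for x
  have "(\<Sum>x\<in>dsum_basis_at Q Cs Bs qs v. \<Sum>x'\<in>dsum_basis_at Q Cs Bs qs w.
      block_change Cs P b x * dsum_coef Cs Bs J a x x' * block_change Cs P' x' b') =
    (\<Sum>x\<in>dsum_basis_at Q Cs Bs qs v. block_change Cs P (k, p, c) x * H x)"
    unfolding kb H_def sum_block_change_right[OF b'[unfolded kb], symmetric]
    by (simp add: sum_distrib_left mult.assoc)
  also have "\<dots> = (if k < length Cs then H (k, p, c)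
      else (\<Sum>c1<qs ! (k - length Cs). P (k - length Cs) c c1 * H (k, p, c1)))"
    by (rule sum_block_change_left[OF b[unfolded kb]])
  also have "\<dots> = dsum_coef Cs Bs N a b b'"
  proof (cases "k = k' \<and> \<not> k < length Cs")
    case True
    let ?j = "k - length Cs"
    have j: "?j < length Bs" "c < qs ! ?j" "c' < qs ! ?j"
      using b b' kb True by (auto simp: dsum_basis_at_def dsum_basis_def)
    have "(\<Sum>c1<qs ! ?j. P ?j c c1 * H (k, p, c1)) =
        (\<Sum>c1<qs ! ?j. P ?j c c1 * (\<Sum>c2<qs ! ?j. band_coef (Bs ! ?j) (J ?j) a p c1 p' c2 * P' ?j c2 c'))"
      using True by (simp add: H_def dsum_coef_def)
    also have "\<dots> = band_coef (Bs ! ?j) (N ?j) a p c p' c'"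
      using inv NJ j by (intro band_coef_conj) auto
    finally show ?thesis
      using True kb by (simp add: dsum_coef_def)
  qed (use kb in \<open>auto simp: H_def dsum_coef_def\<close>)
  finally show ?thesis
    by simp
qed

lemma dsum_point_conj_in_gl_orbit:
  assumes G: "gentle Q" and inv: "\<forall>j<length Bs. inverse_mats (qs ! j) (P j) (P' j)"
    and NJ: "\<forall>j<length Bs. \<forall>c<qs ! j. \<forall>c'<qs ! j.
      N j c c' = (\<Sum>c1<qs ! j. \<Sum>c2<qs ! j. P j c c1 * J j c1 c2 * P' j c2 c')"
  shows "dsum_point Q Cs Bs qs N \<in> gl_orbit Q (dimD Q Cs Bs qs) (dsum_point Q Cs Bs qs J)"
  unfolding dsum_point_def
proof (rule coef_point_in_gl_orbit[where Bv = "dsum_basis_at Q Cs Bs qs" and S = "block_change Cs P"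
      and T = "block_change Cs P'"])
  show "\<forall>a\<in>arrs Q. src Q a \<in> verts Q \<and> tgt Q a \<in> verts Q"
    using gentle_arr_verts[OF G] by blast
  show "\<forall>v\<in>verts Q. bij_betw (dsum_enum Q Cs Bs qs v) {..<dimD Q Cs Bs qs v} (dsum_basis_at Q Cs Bs qs v)"
    by (simp add: bij_dsum_enum)
  then show "\<forall>v\<in>verts Q. bij_betw (dsum_enum Q Cs Bs qs v) {..<dimD Q Cs Bs qs v} (dsum_basis_at Q Cs Bs qs v)" .
  show "\<forall>v\<in>verts Q. \<forall>b\<in>dsum_basis_at Q Cs Bs qs v. \<forall>b'\<in>dsum_basis_at Q Cs Bs qs v.
      (\<Sum>x\<in>dsum_basis_at Q Cs Bs qs v. block_change Cs P b x * block_change Cs P' x b') = (if b = b' then 1 else 0)"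
    using block_change_inverse[OF inv] by blast
  have "\<forall>j<length Bs. inverse_mats (qs ! j) (P' j) (P j)"
    using inv inverse_mats_sym by blast
  then show "\<forall>v\<in>verts Q. \<forall>b\<in>dsum_basis_at Q Cs Bs qs v. \<forall>b'\<in>dsum_basis_at Q Cs Bs qs v.
      (\<Sum>x\<in>dsum_basis_at Q Cs Bs qs v. block_change Cs P' b x * block_change Cs P x b') = (if b = b' then 1 else 0)"
    using block_change_inverse[of Bs qs P' P] by blast
  show "\<forall>a\<in>arrs Q. \<forall>b\<in>dsum_basis_at Q Cs Bs qs (tgt Q a). \<forall>b'\<in>dsum_basis_at Q Cs Bs qs (src Q a).
      dsum_coef Cs Bs N a b b' = (\<Sum>x\<in>dsum_basis_at Q Cs Bs qs (tgt Q a). \<Sum>x'\<in>dsum_basis_at Q Cs Bs qs (src Q a).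
        block_change Cs P b x * dsum_coef Cs Bs J a x x' * block_change Cs P' x' b')"
    using dsum_coef_conj[OF inv NJ] by blast
qed

lemma inv_upper_triangular_similar_jordan_partitions:
  fixes N :: "nat \<Rightarrow> nat \<Rightarrow> nat \<Rightarrow> 'k::field"
  assumes "\<forall>j<length qs. inv_upper_triangular (qs ! j) (N j)"
  obtains parts P P' where "jordan_partitions qs parts" "\<forall>j<length qs. inverse_mats (qs ! j) (P j) (P' j)"
    "\<forall>j<length qs. \<forall>c<qs ! j. \<forall>c'<qs ! j.
      N j c c' = (\<Sum>c1<qs ! j. \<Sum>c2<qs ! j. P j c c1 * jordan_blocks (parts ! j) c1 c2 * P' j c2 c')"
proof -
  define R where "R j t \<longleftrightarrow> (case t of (ps, Pj, Pj') \<Rightarrow> sum_list (map snd ps) = qs ! j \<and>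
      (\<forall>(lam, q)\<in>set ps. lam \<noteq> 0 \<and> q \<ge> 1) \<and> inverse_mats (qs ! j) Pj Pj' \<and>
      (\<forall>c<qs ! j. \<forall>c'<qs ! j. N j c c' = (\<Sum>c1<qs ! j. \<Sum>c2<qs ! j. Pj c c1 * jordan_blocks ps c1 c2 * Pj' c2 c')))"
    for j and t :: "('k \<times> nat) list \<times> (nat \<Rightarrow> nat \<Rightarrow> 'k) \<times> (nat \<Rightarrow> nat \<Rightarrow> 'k)"
  have "\<exists>t. j < length qs \<longrightarrow> R j t" for j
  proof (cases "j < length qs")
    case True
    then have "inv_upper_triangular (qs ! j) (N j)"
      using assms by blast
    then obtain ps Pj Pj' where "sum_list (map snd ps) = qs ! j" "\<forall>(lam, q)\<in>set ps. lam \<noteq> 0 \<and> q \<ge> 1"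
      "inverse_mats (qs ! j) Pj Pj'"
      "\<forall>c<qs ! j. \<forall>c'<qs ! j. N j c c' = (\<Sum>c1<qs ! j. \<Sum>c2<qs ! j. Pj c c1 * jordan_blocks ps c1 c2 * Pj' c2 c')"
      by (rule inv_upper_triangular_similar_jordan_blocks)
    then have "R j (ps, Pj, Pj')"
      unfolding R_def by simp
    then show ?thesis
      by blast
  qed simp
  then obtain f where f: "\<And>j. j < length qs \<Longrightarrow> R j (f j)"
    by metis
  define parts where "parts = map (\<lambda>j. fst (f j)) [0..<length qs]"
  define P where "P j = fst (snd (f j))" for j
  define P' where "P' j = snd (snd (f j))" for j
  have R: "R j (parts ! j, P j, P' j)" if "j < length qs" for j
    using f[OF that] that unfolding parts_def P_def P'_def by (simp add: prod_eq_iff)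
  have "length parts = length qs"
    unfolding parts_def by simp
  then have "jordan_partitions qs parts"
    using R unfolding jordan_partitions_def R_def by auto
  moreover have "\<forall>j<length qs. inverse_mats (qs ! j) (P j) (P' j)"
    using R unfolding R_def by auto
  moreover have "\<forall>j<length qs. \<forall>c<qs ! j. \<forall>c'<qs ! j.
      N j c c' = (\<Sum>c1<qs ! j. \<Sum>c2<qs ! j. P j c c1 * jordan_blocks (parts ! j) c1 c2 * P' j c2 c')"
    using R unfolding R_def by auto
  ultimately show ?thesis
    by (rule that)
qed

lemma dsum_family_subset_famO:
  assumes "gentle Q" "length qs = length Bs"
  shows "dsum_family Q Cs Bs qs \<subseteq> (famO Q Cs Bs qs :: ('a, 'k::field) point set)"
proof
  fix x :: "('a, 'k) point"
  assume "x \<in> dsum_family Q Cs Bs qs"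
  then obtain N where N: "\<forall>j<length qs. inv_upper_triangular (qs ! j) (N j)"
    and x: "x \<in> gl_orbit Q (dimD Q Cs Bs qs) (dsum_point Q Cs Bs qs N)"
    unfolding dsum_family_def by blast
  obtain parts P P' where parts: "jordan_partitions qs parts" and P: "\<forall>j<length qs. inverse_mats (qs ! j) (P j) (P' j)"
    and NJ: "\<forall>j<length qs. \<forall>c<qs ! j. \<forall>c'<qs ! j.
      N j c c' = (\<Sum>c1<qs ! j. \<Sum>c2<qs ! j. P j c c1 * jordan_blocks (parts ! j) c1 c2 * P' j c2 c')"
    using inv_upper_triangular_similar_jordan_partitions[OF N] by blast
  obtain e where e: "\<forall>v\<in>verts Q. bij_betw (e v) {..<dimD Q Cs Bs qs v} (comps_basis_at Q Cs Bs parts v)"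
    and rep: "rep_point Q (dimD Q Cs Bs qs) (comps Cs Bs parts) e = dsum_point Q Cs Bs qs (\<lambda>j. jordan_blocks (parts ! j))"
    using dsum_point_jordan_blocks_eq_rep_point[OF assms parts] by blast
  have "dsum_point Q Cs Bs qs N \<in> gl_orbit Q (dimD Q Cs Bs qs) (rep_point Q (dimD Q Cs Bs qs) (comps Cs Bs parts) e)"
    unfolding rep using dsum_point_conj_in_gl_orbit[OF assms(1)] P NJ assms(2) by simp
  then show "x \<in> famO Q Cs Bs qs"
    unfolding famO_eq[OF assms(2)] using gl_orbit_trans[OF _ x] parts e by blast
qed

section \<open>Irreducibility of the family\<close>

lemma gl_act_eq_inv_fun:
  assumes "\<forall>a\<in>arrs Q. src Q a \<in> verts Q \<and> tgt Q a \<in> verts Q"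
    and inv: "\<forall>v\<in>verts Q. inverse_mats (d v) (g v) (h v)"
  shows "gl_act Q d g h y = gl_act Q d g (\<lambda>v. inv_fun (d v) (g v)) y"
proof (rule gl_act_cong[OF assms(1)])
  fix v i j assume "v \<in> verts Q" "i < d v" "j < d v"
  moreover from this have "inverse_mats (d v) (g v) (inv_fun (d v) (g v))"
    using inv inverse_mats_det_nonzero inverse_mats_inv_fun by blast
  ultimately show "g v i j = g v i j \<and> h v i j = inv_fun (d v) (g v) i j"
    using inv inverse_mats_unique by blast
qed

lemma range_poly_adj_mat:
  assumes "\<And>i j. i < n \<Longrightarrow> j < n \<Longrightarrow> (\<lambda>t. f t i j) \<in> range poly" "l < n" "j < n"
  shows "(\<lambda>t. adj_mat (mat_fun n n (f t)) $$ (l, j)) \<in> range poly"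
proof -
  have "(\<lambda>t. det (mat_delete (mat_fun n n (f t)) j l)) \<in> range poly"
  proof (rule range_poly_det[where n = "n - 1"])
    show "mat_delete (mat_fun n n (f t)) j l \<in> carrier_mat (n - 1) (n - 1)" for t
      by (rule mat_delete_carrier) simp
    fix i i' assume "i < n - 1" "i' < n - 1"
    then show "(\<lambda>t. mat_delete (mat_fun n n (f t)) j l $$ (i, i')) \<in> range poly"
      using assms by (simp add: mat_delete_def)
  qed
  then show ?thesis
    using assms(2,3) by (simp add: adj_mat_def cofactor_def range_poly_mult range_poly_const)
qed

lemma range_poly_dsum_point:
  assumes "\<And>j c c'. (\<lambda>t. N t j c c') \<in> range poly"
  shows "(\<lambda>t. dsum_point Q Cs Bs qs (N t) a i j) \<in> range poly"
proof -
  have band: "(\<lambda>t. band_coef B (N t k) a p c p' c') \<in> range poly" for B k p c p' c'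
    unfolding band_coef_def by (intro range_poly_sum range_poly_if range_poly_const assms)
  have coef: "(\<lambda>t. dsum_coef Cs Bs (N t) a b b') \<in> range poly" for b b'
    by (cases b, cases b') (auto simp: dsum_coef_def intro!: range_poly_if range_poly_const band)
  show ?thesis
    unfolding dsum_point_def coef_point_def by (intro range_poly_if range_poly_const coef)
qed

lemma gl_act_inv_fun_regular_off:
  fixes G :: "'k::field \<Rightarrow> 'v \<Rightarrow> nat \<Rightarrow> nat \<Rightarrow> 'k"
  assumes ends: "\<forall>a\<in>arrs Q. src Q a \<in> verts Q \<and> tgt Q a \<in> verts Q"
    and G: "\<And>v i l. (\<lambda>t. G t v i l) \<in> range poly" and y: "\<And>a i j. (\<lambda>t. y t a i j) \<in> range poly"
    and q: "\<And>v. v \<in> verts Q \<Longrightarrow> \<exists>E\<in>range poly. \<forall>t. poly q t = det (mat_fun (d v) (d v) (G t v)) * E t"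
  shows "(\<lambda>t. gl_act Q d (G t) (\<lambda>v. inv_fun (d v) (G t v)) (y t) a i j) \<in> regular_off q"
proof (cases "a \<in> arrs Q \<and> i < d (tgt Q a) \<and> j < d (src Q a)")
  case True
  let ?t = "tgt Q a" and ?s = "src Q a"
  obtain E where "\<And>t. poly q t = det (mat_fun (d ?s) (d ?s) (G t ?s)) * E t" "E \<in> range poly"
    using q ends True by blast
  then have "(\<lambda>t. inverse (det (mat_fun (d ?s) (d ?s) (G t ?s)))) \<in> regular_off q"
    by (rule regular_off_inverse)
  moreover have "(\<lambda>t. adj_mat (mat_fun (d ?s) (d ?s) (G t ?s)) $$ (l', j)) \<in> regular_off q" if "l' < d ?s" for l'
    using True that by (intro range_poly_regular_off range_poly_adj_mat G) auto
  ultimately have "(\<lambda>t. \<Sum>l<d ?t. \<Sum>l'<d ?s. G t ?t i l * y t a l l' *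
      (adj_mat (mat_fun (d ?s) (d ?s) (G t ?s)) $$ (l', j) * inverse (det (mat_fun (d ?s) (d ?s) (G t ?s)))))
      \<in> regular_off q"
    by (intro regular_off_sum regular_off_mult) (auto intro: range_poly_regular_off G y)
  then show ?thesis
    using True by (simp add: gl_act_def inv_fun_def divide_inverse)
next
  case False
  then have "(\<lambda>t. gl_act Q d (G t) (\<lambda>v. inv_fun (d v) (G t v)) (y t) a i j) = (\<lambda>t. 0)"
    by (auto simp: gl_act_def)
  then show ?thesis
    by (simp add: range_poly_regular_off range_poly_const)
qed

lemma inv_upper_triangular_segment:
  assumes "inv_upper_triangular n M1" "inv_upper_triangular n M2"
    and "\<forall>i<n. (1 - t) * M1 i i + t * M2 i i \<noteq> (0::'k::comm_ring_1)"
  shows "inv_upper_triangular n (\<lambda>i j. (1 - t) * M1 i j + t * M2 i j)"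
  using assms unfolding inv_upper_triangular_def by simp

lemma gl_act_in_dsum_family:
  assumes "\<forall>v\<in>verts Q. inverse_mats (dimD Q Cs Bs qs v) (g v) (h v)"
    and "\<forall>j<length qs. inv_upper_triangular (qs ! j) (N j)"
  shows "gl_act Q (dimD Q Cs Bs qs) g h (dsum_point Q Cs Bs qs N) \<in> dsum_family Q Cs Bs qs"
proof -
  have "gl_act Q (dimD Q Cs Bs qs) g h (dsum_point Q Cs Bs qs N) \<in> gl_orbit Q (dimD Q Cs Bs qs) (dsum_point Q Cs Bs qs N)"
    using assms(1) unfolding gl_orbit_def by blast
  then show ?thesis
    using assms(2) unfolding dsum_family_def by blast
qed

lemma dsum_familyE:
  assumes "x \<in> dsum_family Q Cs Bs qs"
  obtains g h N where "\<forall>v\<in>verts Q. inverse_mats (dimD Q Cs Bs qs v) (g v) (h v)"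
    "\<forall>j<length qs. inv_upper_triangular (qs ! j) (N j)" "x = gl_act Q (dimD Q Cs Bs qs) g h (dsum_point Q Cs Bs qs N)"
  using assms unfolding dsum_family_def gl_orbit_def by blast

text \<open>Two points of the family are joined by the segment between their parameters \<open>(g, N)\<close>; along it,
  the inverse of \<open>g\<close> is the adjugate divided by the determinant, so the coordinates are regular
  off the zeros of the product of these determinants and of the diagonal entries of \<open>N\<close>.\<close>

lemma dsum_family_rational_curves:
  fixes x1 x2 :: "('a, 'k::field) point"
  assumes G: "gentle Q" and x1: "x1 \<in> dsum_family Q Cs Bs qs" and x2: "x2 \<in> dsum_family Q Cs Bs qs"
  shows "\<exists>Phi q. poly q 0 \<noteq> 0 \<and> poly q 1 \<noteq> 0 \<and> Phi 0 = x1 \<and> Phi 1 = x2 \<and>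
    (\<forall>t. poly q t \<noteq> 0 \<longrightarrow> Phi t \<in> dsum_family Q Cs Bs qs) \<and> (\<forall>a i j. (\<lambda>t. Phi t a i j) \<in> regular_off q)"
proof -
  let ?d = "dimD Q Cs Bs qs"
  have ends: "\<forall>a\<in>arrs Q. src Q a \<in> verts Q \<and> tgt Q a \<in> verts Q"
    using gentle_arr_verts[OF G] by blast
  have fin: "finite (verts Q)"
    using G unfolding gentle_def by blast
  obtain g1 h1 N1 where g1: "\<forall>v\<in>verts Q. inverse_mats (?d v) (g1 v) (h1 v)"
    and N1: "\<forall>j<length qs. inv_upper_triangular (qs ! j) (N1 j)" and x1: "x1 = gl_act Q ?d g1 h1 (dsum_point Q Cs Bs qs N1)"
    using x1 by (rule dsum_familyE)
  obtain g2 h2 N2 where g2: "\<forall>v\<in>verts Q. inverse_mats (?d v) (g2 v) (h2 v)"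
    and N2: "\<forall>j<length qs. inv_upper_triangular (qs ! j) (N2 j)" and x2: "x2 = gl_act Q ?d g2 h2 (dsum_point Q Cs Bs qs N2)"
    using x2 by (rule dsum_familyE)
  define g where "g t v i l = (1 - t) * g1 v i l + t * g2 v i l" for t v i l
  define N where "N t j c c' = (1 - t) * N1 j c c' + t * N2 j c c'" for t j c c'
  define D where "D t v = det (mat_fun (?d v) (?d v) (g t v))" for t v
  define diag where "diag t = (\<Prod>j<length qs. \<Prod>i<qs ! j. N t j i i)" for t
  define Phi where "Phi t = gl_act Q ?d (g t) (\<lambda>v. inv_fun (?d v) (g t v)) (dsum_point Q Cs Bs qs (N t))" for t
  have g_poly: "(\<lambda>t. g t v i l) \<in> range poly" for v i l
    unfolding g_def by (intro range_poly_add range_poly_mult range_poly_diff range_poly_const range_poly_id)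
  have N_poly: "(\<lambda>t. N t j c c') \<in> range poly" for j c c'
    unfolding N_def by (intro range_poly_add range_poly_mult range_poly_diff range_poly_const range_poly_id)
  have D_poly: "(\<lambda>t. D t v) \<in> range poly" for v
    unfolding D_def by (intro range_poly_det[where n = "?d v"]) (auto intro: g_poly)
  have diag_poly: "diag \<in> range poly"
    unfolding diag_def by (intro range_poly_prod N_poly)
  have "(\<lambda>t. (\<Prod>v\<in>verts Q. D t v) * diag t) \<in> range poly"
    by (intro range_poly_mult range_poly_prod D_poly diag_poly)
  then obtain q where "(\<lambda>t. (\<Prod>v\<in>verts Q. D t v) * diag t) = poly q"
    by blast
  then have q: "poly q t = (\<Prod>v\<in>verts Q. D t v) * diag t" for t
    by (simp add: fun_eq_iff)
  have D_nonzero: "D t v \<noteq> 0" if "poly q t \<noteq> 0" "v \<in> verts Q" for t v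
    using that fin unfolding q by (simp add: prod_zero_iff)
  have N_nonzero: "N t j i i \<noteq> 0" if "poly q t \<noteq> 0" "j < length qs" "i < qs ! j" for t j i
    using that fin unfolding q diag_def by (simp add: prod_zero_iff)
  have ends_g: "g 0 = g1" "g 1 = g2" "N 0 = N1" "N 1 = N2"
    unfolding g_def N_def by (simp_all add: fun_eq_iff)
  have "D 0 v \<noteq> 0" "D 1 v \<noteq> 0" if "v \<in> verts Q" for v
    using g1 g2 that inverse_mats_det_nonzero unfolding D_def ends_g by blast+
  moreover have "N 0 j i i \<noteq> 0" "N 1 j i i \<noteq> 0" if "j < length qs" "i < qs ! j" for j i
    using N1 N2 that unfolding ends_g inv_upper_triangular_def by blast+
  ultimately have "poly q 0 \<noteq> 0" "poly q 1 \<noteq> 0"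
    using fin unfolding q diag_def by (simp_all add: prod_zero_iff)
  moreover have "Phi 0 = x1" "Phi 1 = x2"
    unfolding Phi_def x1 x2 ends_g
    by (rule gl_act_eq_inv_fun[OF ends g1, symmetric], rule gl_act_eq_inv_fun[OF ends g2, symmetric])
  moreover have "Phi t \<in> dsum_family Q Cs Bs qs" if "poly q t \<noteq> 0" for t
  proof -
    have "\<forall>v\<in>verts Q. inverse_mats (?d v) (g t v) (inv_fun (?d v) (g t v))"
      using D_nonzero[OF that] unfolding D_def by (blast intro: inverse_mats_inv_fun)
    moreover have "\<forall>j<length qs. inv_upper_triangular (qs ! j) (N t j)"
      using N1 N2 N_nonzero[OF that] unfolding N_def by (blast intro: inv_upper_triangular_segment)
    ultimately show ?thesis
      unfolding Phi_def by (rule gl_act_in_dsum_family)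
  qed
  moreover have "(\<lambda>t. Phi t a i j) \<in> regular_off q" for a i j
    unfolding Phi_def
  proof (rule gl_act_inv_fun_regular_off[OF ends g_poly range_poly_dsum_point[OF N_poly]])
    fix v assume "v \<in> verts Q"
    then have "poly q t = D t v * ((\<Prod>v'\<in>verts Q - {v}. D t v') * diag t)" for t
      using fin unfolding q by (simp add: prod.remove mult.assoc)
    moreover have "(\<lambda>t. (\<Prod>v'\<in>verts Q - {v}. D t v') * diag t) \<in> range poly"
      by (intro range_poly_mult range_poly_prod D_poly diag_poly)
    ultimately show "\<exists>E\<in>range poly. \<forall>t. poly q t = det (mat_fun (?d v) (?d v) (g t v)) * E t"
      by (intro bexI[where x = "\<lambda>t. (\<Prod>v'\<in>verts Q - {v}. D t v') * diag t"]) (simp_all add: D_def)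
  qed
  ultimately show ?thesis
    by (intro exI[of _ Phi] exI[of _ q]) simp
qed

lemma dsum_family_nonempty: "dsum_family Q Cs Bs qs \<noteq> ({} :: ('a, 'k::field) point set)"
proof -
  let ?one = "\<lambda>i j. if i = j then 1 else 0 :: 'k"
  have "\<forall>v\<in>verts Q. inverse_mats (dimD Q Cs Bs qs v) ?one ?one"
    by (simp add: inverse_mats_one)
  moreover have "\<forall>j<length qs. inv_upper_triangular (qs ! j) ?one"
    unfolding inv_upper_triangular_def by simp
  ultimately have "gl_act Q (dimD Q Cs Bs qs) (\<lambda>v. ?one) (\<lambda>v. ?one) (dsum_point Q Cs Bs qs (\<lambda>j. ?one))
      \<in> dsum_family Q Cs Bs qs"
    by (rule gl_act_in_dsum_family)
  then show ?thesis
    by blast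
qed

lemma dsum_family_aff: "dsum_family Q Cs Bs qs \<subseteq> aff Q (dimD Q Cs Bs qs)"
proof
  fix x assume "x \<in> dsum_family Q Cs Bs qs"
  then show "x \<in> aff Q (dimD Q Cs Bs qs)"
    by (rule dsum_familyE) (simp add: gl_act_aff)
qed

lemma zirreducible_dsum_family:
  assumes "gentle Q" "infinite (UNIV :: 'k::field set)"
  shows "zirreducible Q (dimD Q Cs Bs qs) (dsum_family Q Cs Bs qs :: ('a, 'k) point set)"
  using zirreducibleI_rational_curves[OF assms(2) dsum_family_nonempty dsum_family_aff
      dsum_family_rational_curves[OF assms(1)]] .

theorem mainTheorem2:
  fixes Q :: "('v,'a) bquiver"
    and Cs :: "('v,'a) walk list"
    and Bs :: "('v,'a) walk list"
    and qs :: "nat list"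
  assumes "alg_closed TYPE('k::field)"
    and "gentle Q" and "fin_dim Q"
    and "\<forall>C\<in>set Cs. is_string Q C"
    and "length qs = length Bs"
    and "\<forall>j<length Bs. is_band Q (Bs ! j) \<and> minimal_band (Bs ! j) \<and> qs ! j \<ge> 1"
    and "\<forall>i<length Bs. \<forall>j<length Bs. i \<noteq> j \<longrightarrow> \<not> band_equiv Q (Bs ! i) (Bs ! j)"
  shows "(famO Q Cs Bs qs :: ('a,'k) point set) \<subseteq> modvar Q (dimD Q Cs Bs qs) \<and>
         zirreducible Q (dimD Q Cs Bs qs) (famO Q Cs Bs qs :: ('a,'k) point set)"
proof -
  have "famO Q Cs Bs qs = (dsum_family Q Cs Bs qs :: ('a, 'k) point set)"
    using famO_subset_dsum_family[OF assms(2,5)] dsum_family_subset_famO[OF assms(2,5)] by blast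
  moreover have "dsum_family Q Cs Bs qs \<subseteq> (modvar Q (dimD Q Cs Bs qs) :: ('a, 'k) point set)"
    using assms(4,6) by (intro dsum_family_modvar[OF assms(2)]) auto
  moreover have "zirreducible Q (dimD Q Cs Bs qs) (dsum_family Q Cs Bs qs :: ('a, 'k) point set)"
    using zirreducible_dsum_family[OF assms(2) alg_closed_infinite[OF assms(1)]] .
  ultimately show ?thesis
    by simp
qed

end
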